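(* Suppose Assumption A holds and the regularizer is $M_h$-Lipschitz ($h^{\pi(\cdot\mid s)}(s)-h^{\pi'(\cdot\mid s)}(s)\le M_h\|\pi(\cdot\mid s)-\pi'(\cdot\mid s)\|$ for all $s,\pi,\pi'$). Let $\bar D_0>0$ satisfy $\max_{s,\pi}D^\pi_{\pi_0}(s)\le\bar D_0$ and let $k\ge1$. If SPMD uses $\eta_t=\alpha/\sqrt k$ for some $\alpha>0$, then for all $s\in\mathcal S$, $$\mathbb E[V^{\pi_{k-1}}(s)-V^{\pi^*}(s)]\le\frac{\alpha^{-1}\bar D_0+2\alpha(\bar Q^2+M_h^2)\log(2k)}{(1-\gamma)\sqrt k}+\frac{4\varsigma(\sqrt2+8\sqrt k)}{1-\gamma}.$$ If moreover $\mu_h>0$ and SPMD uses $\eta_t=\frac1{\mu_h(t+1)}$, then for all $s\in\mathcal S$, $$\mathbb E[V^{\pi_{k-1}}(s)-V^{\pi^*}(s)]\le\frac{\mu_h\bar D_0+3\mu_h^{-1}(\bar Q^2+M_h^2)\ln(2k)}{(1-\gamma)k}+\frac{4\varsigma\ln(2k)}{1-\gamma}.$$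
   Context: MDP: finite $\mathcal S$, $\mathcal A$, transition probabilities $\mathcal P(s'\mid s,a)$, cost $c$, discount $\gamma\in[0,1)$; policies assign $\pi(\cdot\mid s)\in\Delta_{|\mathcal A|}$. $\|\cdot\|$ is a norm on $\mathbb R^{|\mathcal A|}$ with $\max_{p\in\Delta_{|\mathcal A|}}\|p\|\le1$ and dual $\|\cdot\|_*$; for $F:\mathcal S\times\mathcal A\to\mathbb R$, $\|F\|_*:=\max_s\|F(s,\cdot)\|_*$. $\omega$ is a differentiable distance-generating function on $\Delta_{|\mathcal A|}$, 1-strongly convex w.r.t. $\|\cdot\|$; $D^{\pi'}_\pi(s):=\omega(\pi'(\cdot\mid s))-\omega(\pi(\cdot\mid s))-\langle\nabla\omega(\pi(\cdot\mid s)),\pi'(\cdot\mid s)-\pi(\cdot\mid s)\rangle$. For each $s$, $p\mapsto h^p(s)$ is closed convex with $h^{p}(s)-h^{p'}(s)-\langle (h')^{p'}(s,\cdot),p-p'\rangle\ge\mu_h[\omega(p)-\omega(p')-\langle\nabla\omega(p'),p-p'\rangle]$, $\mu_h\ge0$. $V^\pi(s)=\mathbb E[\sum_{t\ge0}\gamma^t(c(s_t,a_t)+h^{\pi(\cdot\mid s_t)}(s_t))\mid s_0=s,\ a_t\sim\pi(\cdot\mid s_t),\ s_{t+1}\sim\mathcal P(\cdot\mid s_t,a_t)]$, $Q^\pi$ the same with $a_0=a$; $\pi^*$ optimal. SPMD: random $\xi_t$ yields estimate $\tilde Q^{\pi_t}$ and $\pi_{t+1}(\cdot\mid s)=\operatorname{argmin}_p\{\eta_t[\langle\tilde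 Q^{\pi_t}(s,\cdot),p\rangle+h^p(s)]+\omega(p)-\omega(\pi_t(\cdot\mid s))-\langle\nabla\omega(\pi_t(\cdot\mid s)),p-\pi_t(\cdot\mid s)\rangle\}$; $\pi_t$ determined by $\xi_{[t-1]}$. Assumption A: $\varsigma,\sigma,\bar Q\ge0$ with $\|\mathbb E_{\xi_t\mid\xi_{[t-1]}}[\tilde Q^{\pi_t}]-Q^{\pi_t}\|_*\le\varsigma$, $\mathbb E_{\xi_t\mid\xi_{[t-1]}}\|\tilde Q^{\pi_t}-Q^{\pi_t}\|_*^2\le\sigma^2$, $\mathbb E_{\xi_t\mid\xi_{[t-1]}}\|\tilde Q^{\pi_t}\|_*^2\le\bar Q^2$. *)

theory Defs
  imports "HOL-Probability.Probability"
begin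

definition prob_simplex :: "(real ^ 'a::finite) set" where
  "prob_simplex = {p. (\<forall>a. 0 \<le> p $ a) \<and> (\<Sum>a\<in>UNIV. p $ a) = 1}"

definition is_norm_fn :: "(real ^ 'a::finite \<Rightarrow> real) \<Rightarrow> bool" where
  "is_norm_fn nrm \<longleftrightarrow>
     (\<forall>x y. nrm (x + y) \<le> nrm x + nrm y) \<and>
     (\<forall>c x. nrm (c *\<^sub>R x) = \<bar>c\<bar> * nrm x) \<and>
     (\<forall>x. nrm x = 0 \<longleftrightarrow> x = 0)"

definition dual_norm :: "(real ^ 'a::finite \<Rightarrow> real) \<Rightarrow> real ^ 'a \<Rightarrow> real" where
  "dual_norm nrm q = Sup {q \<bullet> p | p. nrm p \<le> 1}"

definition dual_normF :: "(real ^ 'a::finite \<Rightarrow> real) \<Rightarrow> ('s::finite \<Rightarrow> real ^ 'a) \<Rightarrow> real" where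
  "dual_normF nrm F = Max (range (\<lambda>s. dual_norm nrm (F s)))"

definition bregman :: "(real ^ 'a::finite \<Rightarrow> real) \<Rightarrow> (real ^ 'a \<Rightarrow> real ^ 'a)
    \<Rightarrow> real ^ 'a \<Rightarrow> real ^ 'a \<Rightarrow> real" where
  "bregman \<omega> g\<omega> p' p = \<omega> p' - \<omega> p - g\<omega> p \<bullet> (p' - p)"

definition is_dgf :: "(real ^ 'a::finite \<Rightarrow> real) \<Rightarrow> (real ^ 'a \<Rightarrow> real)
    \<Rightarrow> (real ^ 'a \<Rightarrow> real ^ 'a) \<Rightarrow> bool" where
  "is_dgf nrm \<omega> g\<omega> \<longleftrightarrow>
     (\<forall>p\<in>prob_simplex. (\<omega> has_derivative (\<lambda>v. g\<omega> p \<bullet> v)) (at p within prob_simplex)) \<and>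
     (\<forall>p\<in>prob_simplex. \<forall>p'\<in>prob_simplex. bregman \<omega> g\<omega> p' p \<ge> (1/2) * (nrm (p' - p))\<^sup>2)"

text \<open>A policy maps each state to a distribution over actions: pol s $ a = pi(a|s).\<close>
definition is_policy :: "('s \<Rightarrow> real ^ 'a::finite) \<Rightarrow> bool" where
  "is_policy pol \<longleftrightarrow> (\<forall>s. pol s \<in> prob_simplex)"

definition is_transition :: "('s::finite \<Rightarrow> 'a \<Rightarrow> 's \<Rightarrow> real) \<Rightarrow> bool" where
  "is_transition P \<longleftrightarrow> (\<forall>s a. (\<forall>s'. 0 \<le> P s a s') \<and> (\<Sum>s'\<in>UNIV. P s a s') = 1)"

fun state_dist :: "('s::finite \<Rightarrow> 'a::finite \<Rightarrow> 's \<Rightarrow> real) \<Rightarrow> ('s \<Rightarrow> real ^ 'a)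
    \<Rightarrow> ('s \<Rightarrow> real) \<Rightarrow> nat \<Rightarrow> 's \<Rightarrow> real" where
  "state_dist P pol mu0 0 = mu0"
| "state_dist P pol mu0 (Suc t) =
     (\<lambda>s''. \<Sum>s'\<in>UNIV. state_dist P pol mu0 t s' * (\<Sum>a\<in>UNIV. pol s' $ a * P s' a s''))"

definition stage_cost :: "('s \<Rightarrow> 'a::finite \<Rightarrow> real) \<Rightarrow> ('s \<Rightarrow> real ^ 'a \<Rightarrow> real)
    \<Rightarrow> ('s \<Rightarrow> real ^ 'a) \<Rightarrow> 's \<Rightarrow> real" where
  "stage_cost c h pol s = (\<Sum>a\<in>UNIV. pol s $ a * c s a) + h s (pol s)"

text \<open>V^pi(s) = E[ sum_t gamma^t (c(s_t,a_t) + h^{pi(.|s_t)}(s_t)) | s_0 = s ].\<close>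
definition Vfun :: "('s::finite \<Rightarrow> 'a::finite \<Rightarrow> 's \<Rightarrow> real) \<Rightarrow> ('s \<Rightarrow> 'a \<Rightarrow> real)
    \<Rightarrow> ('s \<Rightarrow> real ^ 'a \<Rightarrow> real) \<Rightarrow> real \<Rightarrow> ('s \<Rightarrow> real ^ 'a) \<Rightarrow> 's \<Rightarrow> real" where
  "Vfun P c h \<gamma> pol s =
     (\<Sum>t. \<gamma> ^ t * (\<Sum>s'\<in>UNIV. state_dist P pol (\<lambda>x. if x = s then 1 else 0) t s' * stage_cost c h pol s'))"

text \<open>Q^pi(s,a): same expectation with a_0 = a (so s_1 ~ P(.|s,a)).\<close>
definition Qfun :: "('s::finite \<Rightarrow> 'a::finite \<Rightarrow> 's \<Rightarrow> real) \<Rightarrow> ('s \<Rightarrow> 'a \<Rightarrow> real)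
    \<Rightarrow> ('s \<Rightarrow> real ^ 'a \<Rightarrow> real) \<Rightarrow> real \<Rightarrow> ('s \<Rightarrow> real ^ 'a) \<Rightarrow> 's \<Rightarrow> real ^ 'a" where
  "Qfun P c h \<gamma> pol s = (\<chi> a. c s a + h s (pol s) +
     (\<Sum>t. \<gamma> ^ Suc t * (\<Sum>s'\<in>UNIV. state_dist P pol (P s a) t s' * stage_cost c h pol s')))"

definition regularizer_ok :: "(real ^ 'a::finite \<Rightarrow> real) \<Rightarrow> (real ^ 'a \<Rightarrow> real ^ 'a)
    \<Rightarrow> ('s \<Rightarrow> real ^ 'a \<Rightarrow> real) \<Rightarrow> real \<Rightarrow> bool" where
  "regularizer_ok \<omega> g\<omega> h \<mu>h \<longleftrightarrow> 0 \<le> \<mu>h \<and>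
     (\<forall>s. convex_on prob_simplex (h s)) \<and>
     (\<forall>s. \<forall>p'\<in>prob_simplex. \<forall>g. (\<forall>p\<in>prob_simplex. h s p \<ge> h s p' + g \<bullet> (p - p')) \<longrightarrow>
         (\<forall>p\<in>prob_simplex. h s p - h s p' - g \<bullet> (p - p') \<ge> \<mu>h * bregman \<omega> g\<omega> p p'))"

text \<open>sigma(xi_0, ..., xi_{t-1}) (trivial for t = 0).\<close>
definition hist_alg :: "'w measure \<Rightarrow> 'x measure \<Rightarrow> (nat \<Rightarrow> 'w \<Rightarrow> 'x) \<Rightarrow> nat \<Rightarrow> 'w measure" where
  "hist_alg M X \<xi> t = sigma (space M) {\<xi> i -` A \<inter> space M | i A. i < t \<and> A \<in> sets X}"

end

theory Submission
  imports Defs "HOL-Analysis.Harmonic_Numbers"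
begin

(* The performance difference lemma writes V^{pi_t}(s) - V^p(s) as the discounted occupancy
   average, under the comparator p, of the per-state gap <Q^{pi_t}, pi_t - p> + h^{pi_t} - h^p.
   The three-point lemma for the prox step bounds this gap by a difference of Bregman
   divergences, a term eta_t (|Q~_t|_*^2 + M_h^2) for the movement of the iterate, and the error
   <Q^{pi_t} - Q~_t, pi_t - p>. Because 1/eta_{t+1} <= 1/eta_t + mu_h, the Bregman terms telescope
   over any window of iterations. The last iterate is the average of all iterates plus a weighted
   sum, with weights 1/(j (j+1)), of window sums compared against the first iterate of the
   window, and the window comparisons cost no initial Bregman term. In expectation the error
   splits into the bias, at most 2 varsigma per step, and a martingale difference with mean zero,
   since the comparator and the occupancy weights are determined by xi_[t-1]. The two step-size
   rules then only require estimates of harmonic sums. *)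

section \<open>Norms on the action space and their duals\<close>

context
  fixes nrm :: "real ^ 'a::finite \<Rightarrow> real"
  assumes nrm: "is_norm_fn nrm"
begin

lemma norm_fn_triangle: "nrm (x + y) \<le> nrm x + nrm y"
  using nrm unfolding is_norm_fn_def by blast

lemma norm_fn_scaleR: "nrm (c *\<^sub>R x) = \<bar>c\<bar> * nrm x"
  using nrm unfolding is_norm_fn_def by blast

lemma norm_fn_eq_0_iff: "nrm x = 0 \<longleftrightarrow> x = 0"
  using nrm unfolding is_norm_fn_def by blast

lemma norm_fn_0 [simp]: "nrm 0 = 0"
  using norm_fn_eq_0_iff by simp

lemma norm_fn_minus [simp]: "nrm (- x) = nrm x"
  using norm_fn_scaleR[of "-1" x] by simp

lemma norm_fn_nonneg: "0 \<le> nrm x"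
  using norm_fn_triangle[of x "- x"] by simp

lemma norm_fn_pos: "x \<noteq> 0 \<Longrightarrow> 0 < nrm x"
  using norm_fn_nonneg[of x] norm_fn_eq_0_iff[of x] by linarith

lemma norm_fn_minus_commute: "nrm (x - y) = nrm (y - x)"
  using norm_fn_minus[of "x - y"] by simp

lemma norm_fn_sum: "nrm (sum f A) \<le> (\<Sum>i\<in>A. nrm (f i))"
proof (induction A rule: infinite_finite_induct)
  case (insert x F)
  then show ?case using norm_fn_triangle[of "f x" "sum f F"] by simp
qed simp_all

lemma norm_fn_le_norm: "\<exists>B\<ge>0. \<forall>x. nrm x \<le> B * norm x"
proof (intro exI conjI allI)
  fix x :: "real ^ 'a"
  have "nrm x = nrm (\<Sum>b\<in>Basis. (x \<bullet> b) *\<^sub>R b)" by (simp add: euclidean_representation)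
  also have "\<dots> \<le> (\<Sum>b\<in>Basis. nrm ((x \<bullet> b) *\<^sub>R b))" by (rule norm_fn_sum)
  also have "\<dots> = (\<Sum>b\<in>Basis. \<bar>x \<bullet> b\<bar> * nrm b)" by (simp add: norm_fn_scaleR)
  also have "\<dots> \<le> (\<Sum>b\<in>Basis. norm x * nrm b)"
    by (intro sum_mono mult_right_mono) (auto simp: Basis_le_norm norm_fn_nonneg)
  finally show "nrm x \<le> (\<Sum>b\<in>Basis. nrm b) * norm x" by (simp add: sum_distrib_left mult.commute)
qed (simp add: sum_nonneg norm_fn_nonneg)

lemma continuous_on_norm_fn: "continuous_on UNIV nrm"
proof -
  obtain B where B: "B \<ge> 0" "\<And>x. nrm x \<le> B * norm x" using norm_fn_le_norm by blast
  have "dist (nrm x) (nrm y) \<le> B * dist x y" for x y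
  proof -
    have "nrm x \<le> nrm y + nrm (x - y)" "nrm y \<le> nrm x + nrm (y - x)"
      using norm_fn_triangle[of y "x - y"] norm_fn_triangle[of x "y - x"] by simp_all
    moreover have "nrm (y - x) \<le> B * norm (x - y)" using B(2)[of "y - x"] by (simp add: norm_minus_commute)
    ultimately show ?thesis using B(2)[of "x - y"] unfolding dist_real_def dist_norm abs_le_iff by linarith
  qed
  then have "B-lipschitz_on UNIV nrm" using B(1) by (intro lipschitz_onI)
  then show ?thesis by (rule lipschitz_on_continuous_on)
qed

lemma norm_le_norm_fn: "\<exists>m>0. \<forall>x. m * norm x \<le> nrm x"
proof -
  have "sphere (0::real ^ 'a) 1 \<noteq> {}"
    using norm_axis_1[of undefined] by (metis mem_sphere_0 empty_iff)
  then obtain x0 where x0: "x0 \<in> sphere (0::real ^ 'a) 1" "\<And>y. y \<in> sphere 0 1 \<Longrightarrow> nrm x0 \<le> nrm y"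
    using continuous_attains_inf[OF compact_sphere _ continuous_on_subset[OF continuous_on_norm_fn]]
    by blast
  have "nrm x0 * norm x \<le> nrm x" for x
  proof (cases "x = 0")
    case False
    then have "nrm x0 \<le> nrm (inverse (norm x) *\<^sub>R x)" by (intro x0(2)) simp
    then show ?thesis using False by (simp add: norm_fn_scaleR field_simps)
  qed simp
  moreover have "0 < nrm x0" using x0(1) by (intro norm_fn_pos) auto
  ultimately show ?thesis by blast
qed

lemma inner_le_norm_div: "\<exists>m>0. \<forall>p q. nrm p \<le> 1 \<longrightarrow> q \<bullet> p \<le> norm q / m"
proof -
  obtain m where m: "m > 0" "\<And>x. m * norm x \<le> nrm x" using norm_le_norm_fn by blast
  have "q \<bullet> p \<le> norm q / m" if "nrm p \<le> 1" for p q :: "real ^ 'a"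
  proof -
    have "norm p \<le> 1 / m" using m that order_trans[OF m(2)[of p]] by (simp add: field_simps)
    then have "norm q * norm p \<le> norm q * (1 / m)" by (intro mult_left_mono) auto
    then show ?thesis using norm_cauchy_schwarz[of q p] by simp
  qed
  then show ?thesis using m(1) by blast
qed

lemma bdd_above_dual_norm_set: "bdd_above {q \<bullet> p |p. nrm p \<le> 1}"
proof -
  obtain m where "\<And>p. nrm p \<le> 1 \<Longrightarrow> q \<bullet> p \<le> norm q / m" using inner_le_norm_div by blast
  then show ?thesis by (intro bdd_aboveI[where M="norm q / m"]) blast
qed

lemma inner_le_dual_norm: "nrm p \<le> 1 \<Longrightarrow> q \<bullet> p \<le> dual_norm nrm q"
  unfolding dual_norm_def by (rule cSup_upper[OF _ bdd_above_dual_norm_set]) blast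

lemma dual_norm_nonneg: "0 \<le> dual_norm nrm q"
  using inner_le_dual_norm[of 0 q] by simp

lemma dual_norm_least: "(\<And>p. nrm p \<le> 1 \<Longrightarrow> q \<bullet> p \<le> B) \<Longrightarrow> dual_norm nrm q \<le> B"
  unfolding dual_norm_def
proof (rule cSup_least)
  have "q \<bullet> 0 \<in> {q \<bullet> p |p. nrm p \<le> 1}" by (auto intro!: exI[of _ 0])
  then show "{q \<bullet> p |p. nrm p \<le> 1} \<noteq> {}" by blast
qed auto

lemma inner_le_dual_norm_mult: "q \<bullet> v \<le> dual_norm nrm q * nrm v"
proof (cases "v = 0")
  case False
  then have pos: "0 < nrm v" by (rule norm_fn_pos)
  then have "q \<bullet> (inverse (nrm v) *\<^sub>R v) \<le> dual_norm nrm q"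
    by (intro inner_le_dual_norm) (simp add: norm_fn_scaleR)
  then have "(q \<bullet> v) / nrm v \<le> dual_norm nrm q" by (simp add: divide_inverse mult.commute)
  then show ?thesis using pos by (simp add: pos_divide_le_eq)
qed simp

lemma dual_norm_triangle: "dual_norm nrm (q + r) \<le> dual_norm nrm q + dual_norm nrm r"
proof (rule dual_norm_least)
  fix p assume "nrm p \<le> 1"
  then show "(q + r) \<bullet> p \<le> dual_norm nrm q + dual_norm nrm r"
    using inner_le_dual_norm[of p q] inner_le_dual_norm[of p r] by (simp add: inner_add_left)
qed

lemma continuous_on_dual_norm: "continuous_on UNIV (dual_norm nrm)"
proof -
  obtain m where m: "m > 0" "\<And>p q. nrm p \<le> 1 \<Longrightarrow> q \<bullet> p \<le> norm q / m"
    using inner_le_norm_div by blast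
  have le: "dual_norm nrm q \<le> 1 / m * norm q" for q
    using m(2) by (intro dual_norm_least) simp
  have "dist (dual_norm nrm x) (dual_norm nrm y) \<le> 1 / m * dist x y" for x y
  proof -
    have "dual_norm nrm x \<le> dual_norm nrm y + dual_norm nrm (x - y)"
      "dual_norm nrm y \<le> dual_norm nrm x + dual_norm nrm (y - x)"
      using dual_norm_triangle[of y "x - y"] dual_norm_triangle[of x "y - x"] by simp_all
    moreover have "dual_norm nrm (y - x) \<le> 1 / m * norm (x - y)"
      using le[of "y - x"] by (simp add: norm_minus_commute)
    ultimately show ?thesis using le[of "x - y"] unfolding dist_real_def dist_norm abs_le_iff by linarith
  qed
  then have "(1 / m)-lipschitz_on UNIV (dual_norm nrm)" using m(1) by (intro lipschitz_onI) auto
  then show ?thesis by (rule lipschitz_on_continuous_on)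
qed

lemma abs_component_le_dual_norm: "\<bar>q $ i\<bar> \<le> nrm (axis i 1) * dual_norm nrm q"
proof -
  have "q \<bullet> axis i 1 \<le> dual_norm nrm q * nrm (axis i 1)"
    "q \<bullet> (- axis i 1) \<le> dual_norm nrm q * nrm (- axis i 1)"
    by (rule inner_le_dual_norm_mult)+
  then show ?thesis by (simp add: cart_eq_inner_axis abs_le_iff mult.commute)
qed

end

lemma dual_norm_le_dual_normF: "dual_norm nrm (F s) \<le> dual_normF nrm F"
  unfolding dual_normF_def by (rule Max_ge) auto

lemma dual_normF_nonneg: "is_norm_fn nrm \<Longrightarrow> 0 \<le> dual_normF nrm F"
  using dual_norm_nonneg dual_norm_le_dual_normF order_trans by metis

section \<open>Policy-induced Markov operators\<close>

definition markov_op :: "('s::finite \<Rightarrow> 'a::finite \<Rightarrow> 's \<Rightarrow> real) \<Rightarrow> ('s \<Rightarrow> real ^ 'a)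
    \<Rightarrow> ('s \<Rightarrow> real) \<Rightarrow> 's \<Rightarrow> real" where
  "markov_op P pol f s = (\<Sum>a\<in>UNIV. pol s $ a * (\<Sum>s'\<in>UNIV. P s a s' * f s'))"

definition discounted_op :: "('s::finite \<Rightarrow> 'a::finite \<Rightarrow> 's \<Rightarrow> real) \<Rightarrow> real \<Rightarrow> ('s \<Rightarrow> real ^ 'a)
    \<Rightarrow> ('s \<Rightarrow> real) \<Rightarrow> 's \<Rightarrow> real" where
  "discounted_op P \<gamma> pol f s = (\<Sum>t. \<gamma> ^ t * (markov_op P pol ^^ t) f s)"

definition occupancy :: "('s::finite \<Rightarrow> 'a::finite \<Rightarrow> 's \<Rightarrow> real) \<Rightarrow> real \<Rightarrow> ('s \<Rightarrow> real ^ 'a) \<Rightarrow> 's \<Rightarrow> 's \<Rightarrow> real" where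
  "occupancy P \<gamma> pol s0 s' = discounted_op P \<gamma> pol (\<lambda>s. of_bool (s = s')) s0"

lemma markov_op_add: "markov_op P pol (\<lambda>s. f s + g s) s = markov_op P pol f s + markov_op P pol g s"
  by (simp add: markov_op_def distrib_left sum.distrib)

lemma markov_op_diff: "markov_op P pol (\<lambda>s. f s - g s) s = markov_op P pol f s - markov_op P pol g s"
  by (simp add: markov_op_def right_diff_distrib sum_subtractf)

lemma markov_op_cmult: "markov_op P pol (\<lambda>s. c * f s) s = c * markov_op P pol f s"
  by (simp add: markov_op_def sum_distrib_left mult.left_commute)

lemma markov_pow_add:
  "(markov_op P pol ^^ t) (\<lambda>s. f s + g s) s = (markov_op P pol ^^ t) f s + (markov_op P pol ^^ t) g s"
proof (induction t arbitrary: s)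
  case (Suc t)
  then have "(markov_op P pol ^^ t) (\<lambda>s. f s + g s)
      = (\<lambda>s. (markov_op P pol ^^ t) f s + (markov_op P pol ^^ t) g s)" by auto
  then show ?case by (simp add: markov_op_add)
qed simp

lemma markov_pow_cmult: "(markov_op P pol ^^ t) (\<lambda>s. c * f s) s = c * (markov_op P pol ^^ t) f s"
proof (induction t arbitrary: s)
  case (Suc t)
  then have "(markov_op P pol ^^ t) (\<lambda>s. c * f s) = (\<lambda>s. c * (markov_op P pol ^^ t) f s)" by auto
  then show ?case by (simp add: markov_op_cmult)
qed simp

lemma summable_markov_op:
  assumes "\<And>s'. summable (\<lambda>t. g t s')"
  shows "summable (\<lambda>t. markov_op P pol (g t) s)"
  unfolding markov_op_def by (intro summable_sum summable_mult assms)

lemma suminf_markov_op: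
  assumes "\<And>s'. summable (\<lambda>t. g t s')"
  shows "(\<Sum>t. markov_op P pol (g t) s) = markov_op P pol (\<lambda>s'. \<Sum>t. g t s') s"
proof -
  have "(\<Sum>t. markov_op P pol (g t) s) = (\<Sum>t. \<Sum>a\<in>UNIV. \<Sum>s'\<in>UNIV. pol s $ a * P s a s' * g t s')"
    by (simp add: markov_op_def sum_distrib_left mult.assoc)
  also have "\<dots> = (\<Sum>a\<in>UNIV. \<Sum>t. \<Sum>s'\<in>UNIV. pol s $ a * P s a s' * g t s')"
    by (intro suminf_sum summable_sum summable_mult assms)
  also have "\<dots> = (\<Sum>a\<in>UNIV. \<Sum>s'\<in>UNIV. \<Sum>t. pol s $ a * P s a s' * g t s')"
    by (intro sum.cong refl suminf_sum summable_mult assms)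
  also have "\<dots> = markov_op P pol (\<lambda>s'. \<Sum>t. g t s') s"
    using assms by (simp add: markov_op_def suminf_mult sum_distrib_left mult.assoc)
  finally show ?thesis .
qed

lemma policy_nonneg: "is_policy pol \<Longrightarrow> 0 \<le> pol s $ a"
  unfolding is_policy_def prob_simplex_def by auto

lemma policy_sum_eq_1: "is_policy pol \<Longrightarrow> (\<Sum>a\<in>UNIV. pol s $ a) = 1"
  unfolding is_policy_def prob_simplex_def by auto

lemma policy_le_1:
  assumes "is_policy pol"
  shows "pol s $ a \<le> 1"
proof -
  have "pol s $ a \<le> (\<Sum>b\<in>UNIV. pol s $ b)"
    by (rule member_le_sum) (use policy_nonneg[OF assms] in auto)
  then show ?thesis using policy_sum_eq_1[OF assms] by simp
qed

lemma transition_nonneg: "is_transition P \<Longrightarrow> 0 \<le> P s a s'"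
  unfolding is_transition_def by auto

lemma transition_sum_eq_1: "is_transition P \<Longrightarrow> (\<Sum>s'\<in>UNIV. P s a s') = 1"
  unfolding is_transition_def by auto

context
  fixes P :: "'s::finite \<Rightarrow> 'a::finite \<Rightarrow> 's \<Rightarrow> real" and pol :: "'s \<Rightarrow> real ^ 'a"
  assumes P: "is_transition P" and pol: "is_policy pol"
begin

lemma markov_op_mono: "(\<And>s. f s \<le> g s) \<Longrightarrow> markov_op P pol f s \<le> markov_op P pol g s"
  unfolding markov_op_def
  by (intro sum_mono mult_left_mono policy_nonneg[OF pol])
    (auto intro: mult_left_mono transition_nonneg[OF P])

lemma markov_op_const: "markov_op P pol (\<lambda>_. c) s = c"
  by (simp add: markov_op_def transition_sum_eq_1[OF P] policy_sum_eq_1[OF pol]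
      flip: sum_distrib_left sum_distrib_right)

lemma markov_pow_mono: "(\<And>s. f s \<le> g s) \<Longrightarrow> (markov_op P pol ^^ t) f s \<le> (markov_op P pol ^^ t) g s"
  by (induction t arbitrary: s) (simp_all add: markov_op_mono)

lemma markov_pow_const: "(markov_op P pol ^^ t) (\<lambda>_. c) s = c"
proof (induction t arbitrary: s)
  case (Suc t)
  then have "(markov_op P pol ^^ t) (\<lambda>_. c) = (\<lambda>_. c)" by auto
  then show ?case by (simp add: markov_op_const)
qed simp

lemma markov_pow_abs_le:
  assumes "\<And>s. \<bar>f s\<bar> \<le> B"
  shows "\<bar>(markov_op P pol ^^ t) f s\<bar> \<le> B"
proof -
  have "(markov_op P pol ^^ t) f s \<le> (markov_op P pol ^^ t) (\<lambda>_. B) s"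
    using assms by (intro markov_pow_mono) (simp add: abs_le_iff)
  moreover have "(markov_op P pol ^^ t) (\<lambda>_. - B) s \<le> (markov_op P pol ^^ t) f s"
    using assms by (intro markov_pow_mono) (metis abs_le_D2 minus_le_iff)
  ultimately show ?thesis by (simp add: markov_pow_const)
qed

context
  fixes \<gamma> :: real
  assumes \<gamma>: "0 \<le> \<gamma>" "\<gamma> < 1"
begin

lemma summable_discounted: "summable (\<lambda>t. \<gamma> ^ t * (markov_op P pol ^^ t) f s)"
proof (rule summable_comparison_test)
  define B where "B = Max (range (\<lambda>s. \<bar>f s\<bar>))"
  have "\<bar>(markov_op P pol ^^ t) f s\<bar> \<le> B" for t
    by (rule markov_pow_abs_le) (simp add: B_def)
  then have "norm (\<gamma> ^ t * (markov_op P pol ^^ t) f s) \<le> B * \<gamma> ^ t" for t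
    using \<gamma> mult_left_mono[of "\<bar>(markov_op P pol ^^ t) f s\<bar>" B "\<gamma> ^ t"]
    by (simp add: abs_mult mult.commute)
  then show "\<exists>N. \<forall>t\<ge>N. norm (\<gamma> ^ t * (markov_op P pol ^^ t) f s) \<le> B * \<gamma> ^ t" by blast
  show "summable (\<lambda>t. B * \<gamma> ^ t)" using \<gamma> by (intro summable_mult summable_geometric) simp
qed

lemma discounted_op_add:
  "discounted_op P \<gamma> pol (\<lambda>s. f s + g s) s = discounted_op P \<gamma> pol f s + discounted_op P \<gamma> pol g s"
  unfolding discounted_op_def markov_pow_add distrib_left
  by (intro suminf_add[symmetric] summable_discounted)

lemma discounted_op_cmult: "discounted_op P \<gamma> pol (\<lambda>s. c * f s) s = c * discounted_op P \<gamma> pol f s"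
  unfolding discounted_op_def markov_pow_cmult mult.left_commute[of "\<gamma> ^ _"]
  by (intro suminf_mult summable_discounted)

lemma discounted_op_diff:
  "discounted_op P \<gamma> pol (\<lambda>s. f s - g s) s = discounted_op P \<gamma> pol f s - discounted_op P \<gamma> pol g s"
  using discounted_op_add[of f "\<lambda>s. - 1 * g s"] discounted_op_cmult[of "- 1" g] by simp

lemma discounted_op_sum:
  "finite I \<Longrightarrow> discounted_op P \<gamma> pol (\<lambda>x. \<Sum>i\<in>I. f i x) s = (\<Sum>i\<in>I. discounted_op P \<gamma> pol (f i) s)"
proof (induction I rule: finite_induct)
  case empty
  then show ?case using discounted_op_cmult[of 0 "\<lambda>_. 0"] by simp
next
  case (insert i I)
  then show ?case by (simp add: discounted_op_add)
qed

lemma discounted_op_mono: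
  "(\<And>s. f s \<le> g s) \<Longrightarrow> discounted_op P \<gamma> pol f s \<le> discounted_op P \<gamma> pol g s"
  unfolding discounted_op_def using \<gamma>
  by (intro suminf_le summable_discounted mult_left_mono markov_pow_mono) auto

lemma discounted_op_const: "discounted_op P \<gamma> pol (\<lambda>_. c) s = c / (1 - \<gamma>)"
proof -
  have "discounted_op P \<gamma> pol (\<lambda>_. c) s = c * (\<Sum>t. \<gamma> ^ t)"
    unfolding discounted_op_def markov_pow_const mult.commute[of "\<gamma> ^ _"]
    using \<gamma> by (intro suminf_mult summable_geometric) simp
  then show ?thesis using \<gamma> by (simp add: suminf_geometric)
qed

lemma discounted_op_nonneg: "(\<And>s. 0 \<le> f s) \<Longrightarrow> 0 \<le> discounted_op P \<gamma> pol f s"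
  using discounted_op_mono[of "\<lambda>_. 0" f] discounted_op_const[of 0] by simp

lemma discounted_op_fixpoint:
  "discounted_op P \<gamma> pol f s = f s + \<gamma> * markov_op P pol (discounted_op P \<gamma> pol f) s"
proof -
  have "discounted_op P \<gamma> pol f s = (\<Sum>t. \<gamma> ^ Suc t * (markov_op P pol ^^ Suc t) f s) + f s"
    unfolding discounted_op_def by (subst suminf_split_head[OF summable_discounted]) simp
  also have "(\<Sum>t. \<gamma> ^ Suc t * (markov_op P pol ^^ Suc t) f s)
      = (\<Sum>t. \<gamma> * markov_op P pol (\<lambda>s'. \<gamma> ^ t * (markov_op P pol ^^ t) f s') s)"
    by (simp add: markov_op_cmult mult.assoc)
  also have "\<dots> = \<gamma> * (\<Sum>t. markov_op P pol (\<lambda>s'. \<gamma> ^ t * (markov_op P pol ^^ t) f s') s)"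
    by (intro suminf_mult summable_markov_op summable_discounted)
  also have "(\<Sum>t. markov_op P pol (\<lambda>s'. \<gamma> ^ t * (markov_op P pol ^^ t) f s') s)
      = markov_op P pol (discounted_op P \<gamma> pol f) s"
    unfolding discounted_op_def by (rule suminf_markov_op[OF summable_discounted])
  finally show ?thesis by simp
qed

lemma markov_fixpoint_unique:
  assumes "\<And>s. g s = f s + \<gamma> * markov_op P pol g s" and "\<And>s. g' s = f s + \<gamma> * markov_op P pol g' s"
  shows "g s = g' s"
proof -
  define d where "d = (\<lambda>s. g s - g' s)"
  define B where "B = Max (range (\<lambda>s. \<bar>d s\<bar>))"
  have dB: "\<bar>d s\<bar> \<le> B" for s unfolding B_def by simp
  have "\<bar>d s\<bar> \<le> \<gamma> * B" for s
  proof -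
    have "d s = \<gamma> * markov_op P pol d s"
      using assms[of s] by (simp add: d_def markov_op_diff right_diff_distrib)
    moreover have "\<bar>markov_op P pol d s\<bar> \<le> B" using markov_pow_abs_le[OF dB, of 1] by simp
    ultimately show ?thesis using \<gamma> by (simp add: abs_mult mult_left_mono)
  qed
  then have "B \<le> \<gamma> * B" unfolding B_def by (simp add: Max_le_iff)
  then have "B \<le> 0" using \<gamma> dB[of s] by (smt (verit) mult_le_cancel_right1)
  then show ?thesis using dB[of s] by (simp add: d_def)
qed

lemma discounted_op_eq_occupancy_sum:
  "discounted_op P \<gamma> pol f s0 = (\<Sum>s'\<in>UNIV. occupancy P \<gamma> pol s0 s' * f s')"
proof -
  have f: "(\<lambda>s. \<Sum>s'\<in>UNIV. f s' * of_bool (s = s')) = f"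
    by (rule ext) (simp add: of_bool_def if_distrib cong: if_cong)
  have "discounted_op P \<gamma> pol (\<lambda>s. \<Sum>s'\<in>UNIV. f s' * of_bool (s = s')) s0
      = (\<Sum>s'\<in>UNIV. occupancy P \<gamma> pol s0 s' * f s')"
    by (subst discounted_op_sum) (simp_all add: discounted_op_cmult occupancy_def mult.commute)
  then show ?thesis unfolding f .
qed

lemma occupancy_nonneg: "0 \<le> occupancy P \<gamma> pol s0 s'"
  unfolding occupancy_def by (rule discounted_op_nonneg) simp

lemma occupancy_le: "occupancy P \<gamma> pol s0 s' \<le> 1 / (1 - \<gamma>)"
  using discounted_op_mono[of "\<lambda>s. of_bool (s = s')" "\<lambda>_. 1" s0] discounted_op_const[of 1 s0]
  unfolding occupancy_def by simp

end
end

lemma measurable_markov_pow: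
  assumes "\<And>s a. (\<lambda>w. p w s $ a) \<in> borel_measurable N"
  shows "(\<lambda>w. (markov_op P (p w) ^^ n) f s) \<in> borel_measurable N"
proof (induction n arbitrary: s)
  case (Suc n)
  then show ?case unfolding funpow.simps o_def markov_op_def using assms by measurable
qed simp

lemma measurable_occupancy:
  assumes "\<And>s a. (\<lambda>w. p w s $ a) \<in> borel_measurable N"
  shows "(\<lambda>w. occupancy P \<gamma> (p w) s0 s') \<in> borel_measurable N"
  unfolding occupancy_def discounted_op_def
  by (intro borel_measurable_suminf borel_measurable_times borel_measurable_const measurable_markov_pow assms)

section \<open>Value functions and the performance difference lemma\<close>

lemma state_dist_sum:
  "(\<Sum>s'\<in>UNIV. state_dist P pol \<mu> t s' * f s') = (\<Sum>s'\<in>UNIV. \<mu> s' * (markov_op P pol ^^ t) f s')"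
proof (induction t arbitrary: f)
  case (Suc t)
  let ?d = "state_dist P pol \<mu> t"
  have "(\<Sum>s''\<in>UNIV. state_dist P pol \<mu> (Suc t) s'' * f s'')
      = (\<Sum>s''\<in>UNIV. \<Sum>s'\<in>UNIV. ?d s' * (\<Sum>a\<in>UNIV. pol s' $ a * P s' a s'') * f s'')"
    by (simp add: sum_distrib_right)
  also have "\<dots> = (\<Sum>s'\<in>UNIV. \<Sum>s''\<in>UNIV. ?d s' * (\<Sum>a\<in>UNIV. pol s' $ a * P s' a s'') * f s'')"
    by (rule sum.swap)
  also have "\<dots> = (\<Sum>s'\<in>UNIV. ?d s' * markov_op P pol f s')"
  proof (rule sum.cong[OF refl])
    fix s'
    have "(\<Sum>s''\<in>UNIV. ?d s' * (\<Sum>a\<in>UNIV. pol s' $ a * P s' a s'') * f s'')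
        = (\<Sum>s''\<in>UNIV. \<Sum>a\<in>UNIV. ?d s' * (pol s' $ a * (P s' a s'' * f s'')))"
      by (simp add: sum_distrib_left sum_distrib_right mult.assoc)
    also have "\<dots> = (\<Sum>a\<in>UNIV. \<Sum>s''\<in>UNIV. ?d s' * (pol s' $ a * (P s' a s'' * f s'')))"
      by (rule sum.swap)
    also have "\<dots> = ?d s' * markov_op P pol f s'"
      by (simp add: markov_op_def sum_distrib_left)
    finally show "(\<Sum>s''\<in>UNIV. ?d s' * (\<Sum>a\<in>UNIV. pol s' $ a * P s' a s'') * f s'')
        = ?d s' * markov_op P pol f s'" .
  qed
  also have "\<dots> = (\<Sum>s'\<in>UNIV. \<mu> s' * (markov_op P pol ^^ Suc t) f s')"
    by (simp only: Suc funpow_Suc_right o_def)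
  finally show ?case .
qed simp

lemma Vfun_eq_discounted_op: "Vfun P c h \<gamma> pol s = discounted_op P \<gamma> pol (stage_cost c h pol) s"
  unfolding Vfun_def discounted_op_def state_dist_sum by (simp add: of_bool_def[symmetric])

definition avg_Q :: "('s::finite \<Rightarrow> 'a::finite \<Rightarrow> 's \<Rightarrow> real) \<Rightarrow> ('s \<Rightarrow> 'a \<Rightarrow> real)
    \<Rightarrow> ('s \<Rightarrow> real ^ 'a \<Rightarrow> real) \<Rightarrow> real \<Rightarrow> ('s \<Rightarrow> real ^ 'a) \<Rightarrow> ('s \<Rightarrow> real ^ 'a) \<Rightarrow> 's \<Rightarrow> real" where
  "avg_Q P c h \<gamma> pol q s = Qfun P c h \<gamma> pol s \<bullet> q s + h s (q s)"

context
  fixes P :: "'s::finite \<Rightarrow> 'a::finite \<Rightarrow> 's \<Rightarrow> real" and \<gamma> :: real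
  assumes P: "is_transition P" and \<gamma>: "0 \<le> \<gamma>" "\<gamma> < 1"
begin

lemma Vfun_bellman:
  assumes "is_policy pol"
  shows "Vfun P c h \<gamma> pol s = stage_cost c h pol s + \<gamma> * markov_op P pol (Vfun P c h \<gamma> pol) s"
  using discounted_op_fixpoint[OF P assms \<gamma>] by (simp add: Vfun_eq_discounted_op[abs_def])

lemma Qfun_eq:
  assumes pol: "is_policy pol"
  shows "Qfun P c h \<gamma> pol s $ a = c s a + h s (pol s) + \<gamma> * (\<Sum>s'\<in>UNIV. P s a s' * Vfun P c h \<gamma> pol s')"
proof -
  let ?C = "stage_cost c h pol"
  note sm = summable_discounted[OF P pol \<gamma>, of ?C]
  have "(\<Sum>t. \<gamma> ^ Suc t * (\<Sum>s'\<in>UNIV. state_dist P pol (P s a) t s' * ?C s'))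
      = (\<Sum>t. \<gamma> * (\<Sum>s'\<in>UNIV. P s a s' * (\<gamma> ^ t * (markov_op P pol ^^ t) ?C s')))"
    unfolding state_dist_sum by (simp only: sum_distrib_left power_Suc mult_ac)
  also have "\<dots> = \<gamma> * (\<Sum>s'\<in>UNIV. \<Sum>t. P s a s' * (\<gamma> ^ t * (markov_op P pol ^^ t) ?C s'))"
    by (simp add: suminf_mult summable_sum summable_mult sm suminf_sum)
  also have "\<dots> = \<gamma> * (\<Sum>s'\<in>UNIV. P s a s' * Vfun P c h \<gamma> pol s')"
    by (simp add: suminf_mult sm Vfun_eq_discounted_op discounted_op_def)
  finally show ?thesis unfolding Qfun_def by simp
qed

lemma avg_Q_eq:
  assumes pol: "is_policy pol" and q: "is_policy q"
  shows "avg_Q P c h \<gamma> pol q s = stage_cost c h q s + h s (pol s) + \<gamma> * markov_op P q (Vfun P c h \<gamma> pol) s"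
proof -
  have "avg_Q P c h \<gamma> pol q s = (\<Sum>a\<in>UNIV. q s $ a * c s a) + h s (pol s) * (\<Sum>a\<in>UNIV. q s $ a)
      + \<gamma> * markov_op P q (Vfun P c h \<gamma> pol) s + h s (q s)"
    unfolding avg_Q_def inner_vec_def Qfun_eq[OF pol] markov_op_def
    by (simp add: algebra_simps sum.distrib sum_distrib_left sum_distrib_right)
  then show ?thesis unfolding stage_cost_def policy_sum_eq_1[OF q] by simp
qed

lemma performance_difference:
  assumes pol: "is_policy pol" and q: "is_policy q"
  shows "Vfun P c h \<gamma> pol s - Vfun P c h \<gamma> q s
     = discounted_op P \<gamma> q (\<lambda>s'. avg_Q P c h \<gamma> pol pol s' - avg_Q P c h \<gamma> pol q s') s"
proof (rule markov_fixpoint_unique[OF P q \<gamma>])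
  fix s'
  show "discounted_op P \<gamma> q (\<lambda>s'. avg_Q P c h \<gamma> pol pol s' - avg_Q P c h \<gamma> pol q s') s'
      = avg_Q P c h \<gamma> pol pol s' - avg_Q P c h \<gamma> pol q s'
        + \<gamma> * markov_op P q (discounted_op P \<gamma> q (\<lambda>s'. avg_Q P c h \<gamma> pol pol s' - avg_Q P c h \<gamma> pol q s')) s'"
    by (rule discounted_op_fixpoint[OF P q \<gamma>])
  show "Vfun P c h \<gamma> pol s' - Vfun P c h \<gamma> q s'
      = avg_Q P c h \<gamma> pol pol s' - avg_Q P c h \<gamma> pol q s'
        + \<gamma> * markov_op P q (\<lambda>s. Vfun P c h \<gamma> pol s - Vfun P c h \<gamma> q s) s'"
    unfolding avg_Q_eq[OF pol pol] avg_Q_eq[OF pol q] markov_op_diff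
    using Vfun_bellman[OF pol, of c h s'] Vfun_bellman[OF q, of c h s'] by (simp add: algebra_simps)
qed

end

section \<open>One prox step\<close>

lemma prob_simplex_convex_comb:
  assumes "y \<in> prob_simplex" "p \<in> prob_simplex" "0 \<le> l" "l \<le> 1"
  shows "(1 - l) *\<^sub>R y + l *\<^sub>R p \<in> prob_simplex"
  using assms unfolding prob_simplex_def
  by (simp add: sum.distrib sum_distrib_left[symmetric])

lemma bregman_self [simp]: "bregman \<omega> g\<omega> x x = 0"
  unfolding bregman_def by simp

lemma bregman_nonneg:
  assumes "is_dgf nrm \<omega> g\<omega>" "p \<in> prob_simplex" "x \<in> prob_simplex"
  shows "0 \<le> bregman \<omega> g\<omega> p x"
proof -
  have "(1/2) * (nrm (p - x))\<^sup>2 \<le> bregman \<omega> g\<omega> p x" using assms unfolding is_dgf_def by blast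
  then show ?thesis by (rule order_trans[rotated]) simp
qed

lemma dgf_grad_inner_ge:
  assumes dgf: "is_dgf nrm \<omega> g\<omega>"
    and y: "y \<in> prob_simplex" and p: "p \<in> prob_simplex"
    and low: "\<And>l. 0 < l \<Longrightarrow> l \<le> 1 \<Longrightarrow> - K * l \<le> \<omega> ((1 - l) *\<^sub>R y + l *\<^sub>R p) - \<omega> y"
  shows "- K \<le> g\<omega> y \<bullet> (p - y)"
proof -
  define seg where "seg t = y + t *\<^sub>R (p - y)" for t :: real
  have seg_eq: "seg t = (1 - t) *\<^sub>R y + t *\<^sub>R p" for t by (simp add: seg_def algebra_simps)
  have "seg ` {0..1} \<subseteq> prob_simplex" using prob_simplex_convex_comb[OF y p] by (auto simp: seg_eq)
  then have "(\<omega> has_derivative (\<lambda>v. g\<omega> y \<bullet> v)) (at (seg 0) within seg ` {0..1})"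
    using dgf y unfolding is_dgf_def seg_def by (auto intro: has_derivative_subset)
  moreover have "(seg has_derivative (\<lambda>t. t *\<^sub>R (p - y))) (at 0 within {0..1})"
    unfolding seg_def by (auto intro!: derivative_eq_intros)
  ultimately have "((\<omega> \<circ> seg) has_derivative (\<lambda>t. (g\<omega> y \<bullet> (p - y)) * t)) (at 0 within {0..1})"
    using diff_chain_within by (fastforce simp: o_def inner_scaleR_right mult.commute)
  then have "((\<omega> \<circ> seg) has_field_derivative (g\<omega> y \<bullet> (p - y))) (at 0 within {0..1})"
    by (simp add: has_field_derivative_def)
  then have "((\<lambda>t. (\<omega> (seg t) - \<omega> y) / t) \<longlongrightarrow> g\<omega> y \<bullet> (p - y)) (at 0 within {0..1})"
    unfolding has_field_derivative_iff by (simp add: seg_def)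
  moreover have "\<forall>\<^sub>F t in at 0 within {0..1}. - K \<le> (\<omega> (seg t) - \<omega> y) / t"
    unfolding eventually_at_filter
    using low by (intro always_eventually) (auto simp: seg_eq pos_le_divide_eq)
  moreover have "at (0::real) within {0..1} \<noteq> bot"
    by (simp add: at_within_Icc_at_right trivial_limit_at_right_real)
  ultimately show ?thesis by (intro tendsto_lowerbound)
qed

lemma prox_three_point:
  assumes dgf: "is_dgf nrm \<omega> g\<omega>"
    and hconv: "convex_on prob_simplex hs"
    and hstr: "\<forall>g. (\<forall>p\<in>prob_simplex. hs p \<ge> hs y + g \<bullet> (p - y)) \<longrightarrow>
         (\<forall>p\<in>prob_simplex. hs p - hs y - g \<bullet> (p - y) \<ge> \<mu> * bregman \<omega> g\<omega> p y)"
    and \<eta>: "\<eta> > 0" and x: "x \<in> prob_simplex" and y: "y \<in> prob_simplex"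
    and opt: "\<forall>p\<in>prob_simplex. \<eta> * (q \<bullet> y + hs y) + bregman \<omega> g\<omega> y x \<le> \<eta> * (q \<bullet> p + hs p) + bregman \<omega> g\<omega> p x"
    and p: "p \<in> prob_simplex"
  shows "\<eta> * (q \<bullet> y + hs y) + bregman \<omega> g\<omega> y x + (1 + \<eta> * \<mu>) * bregman \<omega> g\<omega> p y
     \<le> \<eta> * (q \<bullet> p + hs p) + bregman \<omega> g\<omega> p x"
proof -
  text \<open>The optimality of \<open>y\<close> makes \<open>g\<close> a subgradient of \<open>hs\<close> at \<open>y\<close>.\<close>
  define g where "g = (1 / \<eta>) *\<^sub>R (g\<omega> x - g\<omega> y - \<eta> *\<^sub>R q)"
  have subgrad: "hs p' \<ge> hs y + g \<bullet> (p' - y)" if p': "p' \<in> prob_simplex" for p'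
  proof -
    define K where "K = \<eta> * (q \<bullet> (p' - y)) - g\<omega> x \<bullet> (p' - y) + \<eta> * (hs p' - hs y)"
    have "- K * l \<le> \<omega> ((1 - l) *\<^sub>R y + l *\<^sub>R p') - \<omega> y" if l: "0 < l" "l \<le> 1" for l
    proof -
      let ?z = "(1 - l) *\<^sub>R y + l *\<^sub>R p'"
      have z: "?z \<in> prob_simplex" using prob_simplex_convex_comb[OF y p'] l by simp
      have zy: "?z - y = l *\<^sub>R (p' - y)" by (simp add: algebra_simps)
      have "0 \<le> \<eta> * (q \<bullet> (?z - y)) + \<eta> * (hs ?z - hs y) + \<omega> ?z - \<omega> y - g\<omega> x \<bullet> (?z - y)"
        using opt z unfolding bregman_def by (fastforce simp: algebra_simps inner_diff_right)
      moreover have "\<eta> * (hs ?z - hs y) \<le> \<eta> * (l * (hs p' - hs y))"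
        using convex_onD[OF hconv, of l y p'] l y p' \<eta> by (intro mult_left_mono) (auto simp: algebra_simps)
      ultimately show ?thesis unfolding zy K_def by (simp add: inner_scaleR_right algebra_simps)
    qed
    then have "- K \<le> g\<omega> y \<bullet> (p' - y)" by (rule dgf_grad_inner_ge[OF dgf y p'])
    then have "\<eta> * (g \<bullet> (p' - y)) \<le> \<eta> * (hs p' - hs y)"
      unfolding g_def K_def using \<eta> by (simp add: inner_diff_left algebra_simps)
    then show ?thesis using \<eta> by simp
  qed
  have "\<eta> * (\<mu> * bregman \<omega> g\<omega> p y) \<le> \<eta> * (hs p - hs y - g \<bullet> (p - y))"
    using hstr subgrad p \<eta> by (intro mult_left_mono) auto
  moreover have "\<eta> * (q \<bullet> p + hs p) + bregman \<omega> g\<omega> p x - (\<eta> * (q \<bullet> y + hs y) + bregman \<omega> g\<omega> y x)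
      = \<eta> * (hs p - hs y - g \<bullet> (p - y)) + bregman \<omega> g\<omega> p y"
    unfolding g_def bregman_def using \<eta> by (simp add: inner_diff_left inner_diff_right algebra_simps)
  ultimately show ?thesis by (simp add: algebra_simps)
qed

lemma linear_sub_square_le:
  fixes a b r e :: real
  assumes "e > 0"
  shows "(a + b) * r - r\<^sup>2 / (2 * e) \<le> e * (a\<^sup>2 + b\<^sup>2)"
proof -
  have "0 \<le> (r - e * (a + b))\<^sup>2 + e\<^sup>2 * (a - b)\<^sup>2" by simp
  also have "\<dots> = 2 * e * (e * (a\<^sup>2 + b\<^sup>2) - ((a + b) * r - r\<^sup>2 / (2 * e)))"
    using assms by (simp add: power2_eq_square field_simps)
  finally show ?thesis using assms by (simp add: zero_le_mult_iff)
qed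

text \<open>Hoelder's inequality and the strong convexity of \<open>\<omega>\<close> absorb the movement from \<open>x\<close> to \<open>y\<close>
  into \<open>\<eta> (\<parallel>q\<parallel>\<^sub>*\<^sup>2 + Mh\<^sup>2)\<close>.\<close>
lemma prox_step_gap:
  assumes nrm: "is_norm_fn nrm"
    and dgf: "is_dgf nrm \<omega> g\<omega>"
    and hconv: "convex_on prob_simplex hs"
    and hstr: "\<forall>g. (\<forall>p\<in>prob_simplex. hs p \<ge> hs y + g \<bullet> (p - y)) \<longrightarrow>
         (\<forall>p\<in>prob_simplex. hs p - hs y - g \<bullet> (p - y) \<ge> \<mu> * bregman \<omega> g\<omega> p y)"
    and hlip: "hs x - hs y \<le> Mh * nrm (x - y)"
    and \<eta>: "\<eta> > 0" and x: "x \<in> prob_simplex" and y: "y \<in> prob_simplex"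
    and opt: "\<forall>p\<in>prob_simplex. \<eta> * (q \<bullet> y + hs y) + bregman \<omega> g\<omega> y x \<le> \<eta> * (q \<bullet> p + hs p) + bregman \<omega> g\<omega> p x"
    and p: "p \<in> prob_simplex"
  shows "(Q \<bullet> x + hs x) - (Q \<bullet> p + hs p)
     \<le> (1 / \<eta>) * bregman \<omega> g\<omega> p x - (1 / \<eta> + \<mu>) * bregman \<omega> g\<omega> p y
       + \<eta> * ((dual_norm nrm q)\<^sup>2 + Mh\<^sup>2) + (Q - q) \<bullet> (x - p)"
proof -
  have "q \<bullet> y + hs y - (q \<bullet> p + hs p)
     \<le> (1 / \<eta>) * (bregman \<omega> g\<omega> p x - bregman \<omega> g\<omega> y x - (1 + \<eta> * \<mu>) * bregman \<omega> g\<omega> p y)"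
    using prox_three_point[OF dgf hconv hstr \<eta> x y opt p] \<eta> by (simp add: field_simps)
  also have "\<dots> = (1 / \<eta>) * bregman \<omega> g\<omega> p x - (1 / \<eta> + \<mu>) * bregman \<omega> g\<omega> p y - bregman \<omega> g\<omega> y x / \<eta>"
    using \<eta> by (simp add: field_simps)
  finally have "q \<bullet> y + hs y - (q \<bullet> p + hs p)
     \<le> (1 / \<eta>) * bregman \<omega> g\<omega> p x - (1 / \<eta> + \<mu>) * bregman \<omega> g\<omega> p y - bregman \<omega> g\<omega> y x / \<eta>" .
  moreover have "q \<bullet> (x - y) + hs x - hs y - bregman \<omega> g\<omega> y x / \<eta> \<le> \<eta> * ((dual_norm nrm q)\<^sup>2 + Mh\<^sup>2)"
  proof -
    have "(1/2) * (nrm (x - y))\<^sup>2 \<le> bregman \<omega> g\<omega> y x"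
      using dgf x y unfolding is_dgf_def by (metis norm_fn_minus_commute[OF nrm])
    then have "(nrm (x - y))\<^sup>2 / (2 * \<eta>) \<le> bregman \<omega> g\<omega> y x / \<eta>" using \<eta> by (simp add: field_simps)
    moreover have "q \<bullet> (x - y) + hs x - hs y \<le> (dual_norm nrm q + Mh) * nrm (x - y)"
      using inner_le_dual_norm_mult[OF nrm, of q "x - y"] hlip by (simp add: algebra_simps)
    ultimately show ?thesis using linear_sub_square_le[OF \<eta>, of "dual_norm nrm q" Mh "nrm (x - y)"] by linarith
  qed
  moreover have "(Q \<bullet> x + hs x) - (Q \<bullet> p + hs p)
      = (q \<bullet> y + hs y - (q \<bullet> p + hs p)) + (q \<bullet> (x - y) + hs x - hs y) + (Q - q) \<bullet> (x - p)"
    by (simp add: inner_diff_left inner_diff_right algebra_simps)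
  ultimately show ?thesis by linarith
qed

section \<open>Deterministic analysis of policy mirror descent\<close>

lemma sum_telescope_le:
  fixes V E a X :: "nat \<Rightarrow> real"
  assumes step: "\<And>t. m \<le> t \<Longrightarrow> V t \<le> a t * X t - a (Suc t) * X (Suc t) + E t"
    and nonneg: "0 \<le> a n * X n" and "m \<le> n"
  shows "(\<Sum>t\<in>{m..<n}. V t) \<le> a m * X m + (\<Sum>t\<in>{m..<n}. E t)"
proof -
  have "(\<Sum>t\<in>{m..<m + d}. V t) + a (m + d) * X (m + d) \<le> a m * X m + (\<Sum>t\<in>{m..<m + d}. E t)" for d
  proof (induction d)
    case (Suc d)
    then show ?case using step[of "m + d"] by simp
  qed simp
  from this[of "n - m"] nonneg \<open>m \<le> n\<close> show ?thesis by simp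
qed

locale pmd_setting =
  fixes P :: "'s::finite \<Rightarrow> 'a::finite \<Rightarrow> 's \<Rightarrow> real"
    and c :: "'s \<Rightarrow> 'a \<Rightarrow> real" and \<gamma> :: real
    and nrm :: "real ^ 'a \<Rightarrow> real" and \<omega> :: "real ^ 'a \<Rightarrow> real" and g\<omega> :: "real ^ 'a \<Rightarrow> real ^ 'a"
    and h :: "'s \<Rightarrow> real ^ 'a \<Rightarrow> real" and \<mu> Mh :: real
  assumes P: "is_transition P" and \<gamma>: "0 \<le> \<gamma>" "\<gamma> < 1"
    and nrm: "is_norm_fn nrm" and dgf: "is_dgf nrm \<omega> g\<omega>" and reg: "regularizer_ok \<omega> g\<omega> h \<mu>"
    and lip: "\<forall>s. \<forall>p\<in>prob_simplex. \<forall>p'\<in>prob_simplex. h s p - h s p' \<le> Mh * nrm (p - p')"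
begin

definition occ_bregman :: "('s \<Rightarrow> real ^ 'a) \<Rightarrow> ('s \<Rightarrow> real ^ 'a) \<Rightarrow> 's \<Rightarrow> real" where
  "occ_bregman p pol s0 = discounted_op P \<gamma> p (\<lambda>s. bregman \<omega> g\<omega> (p s) (pol s)) s0"

lemma occ_bregman_nonneg: "is_policy p \<Longrightarrow> is_policy pol \<Longrightarrow> 0 \<le> occ_bregman p pol s0"
  unfolding occ_bregman_def
  by (intro discounted_op_nonneg[OF P _ \<gamma>] bregman_nonneg[OF dgf]) (auto simp: is_policy_def)

lemma occ_bregman_self: "is_policy p \<Longrightarrow> occ_bregman p p s0 = 0"
  unfolding occ_bregman_def using discounted_op_const[OF P _ \<gamma>, of p 0] by simp

lemma pmd_step_value_le:
  assumes pt: "is_policy pt" and pt1: "is_policy pt1" and p: "is_policy p" and \<eta>: "\<eta> > 0"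
    and opt: "\<forall>s. \<forall>q\<in>prob_simplex. \<eta> * (qt s \<bullet> pt1 s + h s (pt1 s)) + bregman \<omega> g\<omega> (pt1 s) (pt s)
          \<le> \<eta> * (qt s \<bullet> q + h s q) + bregman \<omega> g\<omega> q (pt s)"
  shows "Vfun P c h \<gamma> pt s0 - Vfun P c h \<gamma> p s0
     \<le> (1 / \<eta>) * occ_bregman p pt s0 - (1 / \<eta> + \<mu>) * occ_bregman p pt1 s0
       + \<eta> * ((dual_normF nrm qt)\<^sup>2 + Mh\<^sup>2) / (1 - \<gamma>)
       + discounted_op P \<gamma> p (\<lambda>s. (Qfun P c h \<gamma> pt s - qt s) \<bullet> (pt s - p s)) s0"
proof -
  let ?W = "discounted_op P \<gamma> p"
  have inS: "pt s \<in> prob_simplex" "pt1 s \<in> prob_simplex" "p s \<in> prob_simplex" for s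
    using pt pt1 p unfolding is_policy_def by auto
  have gap: "avg_Q P c h \<gamma> pt pt s - avg_Q P c h \<gamma> pt p s
      \<le> (1 / \<eta>) * bregman \<omega> g\<omega> (p s) (pt s) - (1 / \<eta> + \<mu>) * bregman \<omega> g\<omega> (p s) (pt1 s)
        + \<eta> * ((dual_normF nrm qt)\<^sup>2 + Mh\<^sup>2) + (Qfun P c h \<gamma> pt s - qt s) \<bullet> (pt s - p s)" for s
  proof -
    have "avg_Q P c h \<gamma> pt pt s - avg_Q P c h \<gamma> pt p s
      \<le> (1 / \<eta>) * bregman \<omega> g\<omega> (p s) (pt s) - (1 / \<eta> + \<mu>) * bregman \<omega> g\<omega> (p s) (pt1 s)
        + \<eta> * ((dual_norm nrm (qt s))\<^sup>2 + Mh\<^sup>2) + (Qfun P c h \<gamma> pt s - qt s) \<bullet> (pt s - p s)"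
      unfolding avg_Q_def
      using reg lip opt inS unfolding regularizer_ok_def
      by (intro prox_step_gap[OF nrm dgf _ _ _ \<eta>]) blast+
    moreover have "(dual_norm nrm (qt s))\<^sup>2 \<le> (dual_normF nrm qt)\<^sup>2"
      using dual_norm_le_dual_normF[of nrm qt s] dual_norm_nonneg[OF nrm, of "qt s"] by (simp add: power_mono)
    then have "\<eta> * ((dual_norm nrm (qt s))\<^sup>2 + Mh\<^sup>2) \<le> \<eta> * ((dual_normF nrm qt)\<^sup>2 + Mh\<^sup>2)"
      using \<eta> by (intro mult_left_mono add_right_mono) auto
    ultimately show ?thesis by linarith
  qed
  have "Vfun P c h \<gamma> pt s0 - Vfun P c h \<gamma> p s0 = ?W (\<lambda>s. avg_Q P c h \<gamma> pt pt s - avg_Q P c h \<gamma> pt p s) s0"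
    by (rule performance_difference[OF P \<gamma> pt p])
  also have "\<dots> \<le> ?W (\<lambda>s. (1 / \<eta>) * bregman \<omega> g\<omega> (p s) (pt s) - (1 / \<eta> + \<mu>) * bregman \<omega> g\<omega> (p s) (pt1 s)
        + \<eta> * ((dual_normF nrm qt)\<^sup>2 + Mh\<^sup>2) + (Qfun P c h \<gamma> pt s - qt s) \<bullet> (pt s - p s)) s0"
    by (rule discounted_op_mono[OF P p \<gamma> gap])
  also have "\<dots> = (1 / \<eta>) * ?W (\<lambda>s. bregman \<omega> g\<omega> (p s) (pt s)) s0
        - (1 / \<eta> + \<mu>) * ?W (\<lambda>s. bregman \<omega> g\<omega> (p s) (pt1 s)) s0
        + ?W (\<lambda>_. \<eta> * ((dual_normF nrm qt)\<^sup>2 + Mh\<^sup>2)) s0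
        + ?W (\<lambda>s. (Qfun P c h \<gamma> pt s - qt s) \<bullet> (pt s - p s)) s0"
    by (simp only: discounted_op_add[OF P p \<gamma>] discounted_op_diff[OF P p \<gamma>] discounted_op_cmult[OF P p \<gamma>])
  finally show ?thesis by (simp add: discounted_op_const[OF P p \<gamma>] occ_bregman_def)
qed

lemma window_value_sum:
  assumes pols: "\<And>t. is_policy (pol t)" and p: "is_policy p"
    and \<eta>: "\<And>t. \<eta> t > 0" and \<eta>_step: "\<And>t. 1 / \<eta> (Suc t) \<le> 1 / \<eta> t + \<mu>" and "m \<le> n"
    and opt: "\<forall>t s. \<forall>q\<in>prob_simplex.
          \<eta> t * (qt t s \<bullet> pol (Suc t) s + h s (pol (Suc t) s)) + bregman \<omega> g\<omega> (pol (Suc t) s) (pol t s)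
          \<le> \<eta> t * (qt t s \<bullet> q + h s q) + bregman \<omega> g\<omega> q (pol t s)"
  shows "(\<Sum>t\<in>{m..<n}. Vfun P c h \<gamma> (pol t) s0 - Vfun P c h \<gamma> p s0)
     \<le> (1 / \<eta> m) * occ_bregman p (pol m) s0
       + (\<Sum>t\<in>{m..<n}. \<eta> t * ((dual_normF nrm (qt t))\<^sup>2 + Mh\<^sup>2) / (1 - \<gamma>)
            + discounted_op P \<gamma> p (\<lambda>s. (Qfun P c h \<gamma> (pol t) s - qt t s) \<bullet> (pol t s - p s)) s0)"
proof (rule sum_telescope_le[where a="\<lambda>t. 1 / \<eta> t" and X="\<lambda>t. occ_bregman p (pol t) s0"])
  fix t
  have X: "0 \<le> occ_bregman p (pol t) s0" for t by (rule occ_bregman_nonneg[OF p pols])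
  then show "0 \<le> 1 / \<eta> n * occ_bregman p (pol n) s0" using \<eta>[of n] by simp
  have "1 / \<eta> (Suc t) * occ_bregman p (pol (Suc t)) s0 \<le> (1 / \<eta> t + \<mu>) * occ_bregman p (pol (Suc t)) s0"
    using \<eta>_step X by (intro mult_right_mono)
  moreover have "Vfun P c h \<gamma> (pol t) s0 - Vfun P c h \<gamma> p s0
     \<le> (1 / \<eta> t) * occ_bregman p (pol t) s0 - (1 / \<eta> t + \<mu>) * occ_bregman p (pol (Suc t)) s0
       + \<eta> t * ((dual_normF nrm (qt t))\<^sup>2 + Mh\<^sup>2) / (1 - \<gamma>)
       + discounted_op P \<gamma> p (\<lambda>s. (Qfun P c h \<gamma> (pol t) s - qt t s) \<bullet> (pol t s - p s)) s0"
    using opt by (intro pmd_step_value_le pols p \<eta>) blast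
  ultimately show "Vfun P c h \<gamma> (pol t) s0 - Vfun P c h \<gamma> p s0
     \<le> 1 / \<eta> t * occ_bregman p (pol t) s0 - 1 / \<eta> (Suc t) * occ_bregman p (pol (Suc t)) s0
       + (\<eta> t * ((dual_normF nrm (qt t))\<^sup>2 + Mh\<^sup>2) / (1 - \<gamma>)
       + discounted_op P \<gamma> p (\<lambda>s. (Qfun P c h \<gamma> (pol t) s - qt t s) \<bullet> (pol t s - p s)) s0)"
    by linarith
qed fact

end

section \<open>From window sums to the last iterate\<close>

definition last_iterate_comb :: "nat \<Rightarrow> real \<Rightarrow> (nat \<Rightarrow> real) \<Rightarrow> real" where
  "last_iterate_comb k a w = a / k + (\<Sum>j\<in>{1..<k}. w j / (real j * (real j + 1)))"

lemma last_iterate_comb_mono: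
  assumes "a \<le> a'" "\<And>j. j \<in> {1..<k} \<Longrightarrow> w j \<le> w' j"
  shows "last_iterate_comb k a w \<le> last_iterate_comb k a' w'"
  unfolding last_iterate_comb_def using assms
  by (intro add_mono divide_right_mono sum_mono) auto

lemma last_iterate_comb_nonneg:
  assumes "0 \<le> a" "\<And>j. j \<in> {1..<k} \<Longrightarrow> 0 \<le> w j"
  shows "0 \<le> last_iterate_comb k a w"
  using last_iterate_comb_mono[of 0 a k "\<lambda>_. 0" w] assms by (simp add: last_iterate_comb_def)

lemma last_iterate_comb_divide:
  "last_iterate_comb k (a / R) (\<lambda>j. w j / R) = last_iterate_comb k a w / R"
  unfolding last_iterate_comb_def by (simp add: add_divide_distrib sum_divide_distrib field_simps)

text \<open>Peeling off the last term of the average \<open>(\<Sum>i<n. r i) / n\<close> costs exactly the weighted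
  window term for \<open>j = n\<close>; by induction the first element \<open>r 0\<close> is recovered.\<close>
lemma first_eq_last_iterate_comb:
  fixes r :: "nat \<Rightarrow> real"
  assumes "n \<ge> 1"
  shows "r 0 = last_iterate_comb n (\<Sum>i<n. r i) (\<lambda>j. \<Sum>i\<le>j. r i - r j)"
  using assms unfolding last_iterate_comb_def
proof (induction n rule: dec_induct)
  case (step n)
  have frac: "a / n = (a + b) / (real n + 1) + (a + b - (real n + 1) * b) / (real n * (real n + 1))"
    for a b :: real
    using step(1) by (simp add: divide_simps) (simp add: algebra_simps)
  have "(\<Sum>i\<le>n. r i - r n) = (\<Sum>i<n. r i) + r n - (real n + 1) * r n"
    by (simp add: sum_subtractf lessThan_Suc_atMost[symmetric] algebra_simps)
  then have "(\<Sum>i<n. r i) / n = (\<Sum>i<Suc n. r i) / Suc n + (\<Sum>i\<le>n. r i - r n) / (real n * (real n + 1))"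
    using frac[of "\<Sum>i<n. r i" "r n"] by simp
  then show ?case using step by (simp add: sum.atLeastLessThan_Suc)
qed simp

lemma last_iterate_comb_eq:
  fixes v :: "nat \<Rightarrow> real"
  assumes k: "k \<ge> 1"
  shows "v (k - 1) = last_iterate_comb k (\<Sum>t\<in>{0..<k}. v t) (\<lambda>j. \<Sum>t\<in>{k - 1 - j..<k}. v t - v (k - 1 - j))"
proof -
  define r where "r i = v (k - Suc i)" for i
  have "(\<Sum>i<k. r i) = (\<Sum>t\<in>{0..<k}. v t)"
    unfolding r_def atLeast0LessThan by (rule sum.nat_diff_reindex)
  moreover have "(\<Sum>i\<le>j. r i - r j) = (\<Sum>t\<in>{k - 1 - j..<k}. v t - v (k - 1 - j))" if "j \<in> {1..<k}" for j
    unfolding r_def using that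
    by (intro sum.reindex_bij_witness[of _ "\<lambda>t. k - 1 - t" "\<lambda>i. k - 1 - i"]) auto
  ultimately show ?thesis
    using first_eq_last_iterate_comb[OF k, of r] unfolding last_iterate_comb_def by (simp add: r_def)
qed

section \<open>Harmonic sums and the two step-size rules\<close>

lemma harm_Suc_upper: "harm (Suc n) \<le> 13/22 + ln (real n + 2) - 1 / (2 * (real n + 2))"
  using euler_mascheroni_lower[of n] euler_mascheroni_less_13_over_22 by (simp add: add.commute)

lemma one_add_harm_le:
  assumes "k \<ge> 1"
  shows "1 + harm (k - 1) \<le> 2 * ln (2 * real k)"
proof (cases "k = 1")
  case True
  then show ?thesis using ln2_ge_two_thirds by (simp add: harm_expand)
next
  case False
  with \<open>k \<ge> 1\<close> obtain n where n: "k = Suc (Suc n)" by (metis One_nat_def Suc_le_D not0_implies_Suc)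
  then have "harm (k - 1) \<le> 13/22 + ln (real k) - 1 / (2 * real k)"
    using harm_Suc_upper[of n] by (simp add: add.commute)
  moreover have "0 \<le> 1 / (2 * real k)" by simp
  moreover have "ln (2 * real k) = ln 2 + ln (real k)" using \<open>k \<ge> 1\<close> by (intro ln_mult_pos) auto
  moreover have "ln 2 \<le> ln (real k)" using n by simp
  ultimately show ?thesis using ln2_ge_two_thirds by linarith
qed

lemma harm_add_twice_harm_le:
  assumes "k \<ge> 1"
  shows "harm k + 2 * harm (k - 1) \<le> 3 * ln (2 * real k)"
proof (cases "k = 1")
  case True
  then show ?thesis using ln2_ge_two_thirds by (simp add: harm_expand)
next
  case False
  with \<open>k \<ge> 1\<close> have k2: "real k \<ge> 2" by simp
  obtain n where n: "k = Suc n" using \<open>k \<ge> 1\<close> by (metis Suc_le_D One_nat_def)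
  define d where "d = 1 / (2 * (real k + 1))"
  have "harm k + 2 * harm (k - 1) = 3 * harm k - 2 / real k"
    using n by (simp add: harm_Suc inverse_eq_divide)
  also have "\<dots> \<le> 3 * (13/22 + ln (real k + 1) - d) - 2 / real k"
    using harm_Suc_upper[of n] n by (simp add: add.commute d_def)
  also have "\<dots> = (39/22 - 3 * d - 2 / real k) + 3 * ln (real k + 1)" by simp
  also have "\<dots> \<le> (2 - 8 / (3 * real k + 1)) + 3 * ln (real k + 1)"
  proof -
    have "8 / (3 * real k + 1) \<le> 8 / (3 * real k)" "3 / (4 * real k) \<le> 3 / (2 * (real k + 1))"
      using k2 by (intro divide_left_mono; simp)+
    moreover have "3 / (4 * real k) + 2 / real k - 8 / (3 * real k) = 1 / (12 * real k)"
      using k2 by (simp add: field_simps)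
    moreover have "0 \<le> 1 / (12 * real k)" by simp
    ultimately show ?thesis unfolding d_def by linarith
  qed
  also have "\<dots> \<le> 3 * ln (2 * real k)"
  proof -
    have "2 * (2 * real k - (real k + 1)) / ((real k + 1) + 2 * real k) \<le> ln (2 * real k) - ln (real k + 1)"
      using k2 by (intro ln_inverse_approx_ge) auto
    moreover have "2 - 8 / (3 * real k + 1) = 3 * (2 * (2 * real k - (real k + 1)) / ((real k + 1) + 2 * real k))"
      using k2 by (simp add: field_simps)
    ultimately show ?thesis by linarith
  qed
  finally show ?thesis .
qed

lemma harm_eq_sum_atLeastLessThan: "k \<ge> 1 \<Longrightarrow> harm (k - 1) = (\<Sum>j\<in>{1..<k}. 1 / real j)"
  unfolding harm_def by (intro sum.cong) (auto simp: inverse_eq_divide)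

lemma sum_inverse_mult_complement:
  assumes k: "k \<ge> 1"
  shows "(\<Sum>j\<in>{1..<k}. 1 / (real j * (real k - real j))) = 2 * harm (k - 1) / real k"
proof -
  have "(\<Sum>j\<in>{1..<k}. 1 / (real j * (real k - real j)))
      = ((\<Sum>j\<in>{1..<k}. 1 / real j) + (\<Sum>j\<in>{1..<k}. 1 / (real k - real j))) / real k"
    unfolding sum.distrib[symmetric] sum_divide_distrib
    by (intro sum.cong refl) (auto simp: field_simps)
  also have "(\<Sum>j\<in>{1..<k}. 1 / (real k - real j)) = (\<Sum>j\<in>{1..<k}. 1 / real j)"
    by (intro sum.reindex_bij_witness[of _ "\<lambda>j. k - j" "\<lambda>j. k - j"]) auto
  finally show ?thesis using harm_eq_sum_atLeastLessThan[OF k] by simp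
qed

definition pmd_rate :: "(nat \<Rightarrow> real) \<Rightarrow> real \<Rightarrow> real \<Rightarrow> real \<Rightarrow> nat \<Rightarrow> real" where
  "pmd_rate \<eta> D0 G vs k = last_iterate_comb k (D0 / \<eta> 0 + (\<Sum>t\<in>{0..<k}. \<eta> t * G + 2 * vs))
     (\<lambda>j. \<Sum>t\<in>{k - 1 - j..<k}. \<eta> t * G + 2 * vs)"

lemma ln_le_sqrt2_add:
  assumes k: "k \<ge> 1"
  shows "ln (2 * real k) \<le> sqrt 2 + 8 * sqrt (real k)"
proof -
  have "ln (2 * real k) = 2 * ln (sqrt (2 * real k))" using k by (simp add: ln_sqrt)
  also have "\<dots> \<le> 2 * sqrt (2 * real k)" using k by (simp add: less_imp_le ln_less_self)
  also have "\<dots> = 2 * sqrt 2 * sqrt (real k)" by (simp add: real_sqrt_mult)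
  also have "\<dots> \<le> 8 * sqrt (real k)" by (intro mult_right_mono) (auto simp: real_le_lsqrt)
  finally show ?thesis by (smt (verit) real_sqrt_ge_zero)
qed

lemma pmd_rate_constant_step:
  assumes \<alpha>: "\<alpha> > 0" and k: "k \<ge> 1" and G: "G \<ge> 0" and vs: "vs \<ge> 0"
    and \<eta>: "\<And>t. \<eta> t = \<alpha> / sqrt (real k)"
  shows "pmd_rate \<eta> D0 G vs k
     \<le> (D0 / \<alpha> + 2 * \<alpha> * G * ln (2 * real k)) / sqrt (real k) + 4 * vs * (sqrt 2 + 8 * sqrt (real k))"
proof -
  define e where "e = \<alpha> / sqrt (real k)"
  define C where "C = e * G + 2 * vs"
  have sk: "sqrt (real k) > 0" using k by simp
  have "C \<ge> 0" using \<alpha> sk G vs by (simp add: C_def e_def)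
  have win: "(\<Sum>t\<in>{k - 1 - j..<k}. C) / (real j * (real j + 1)) = C * (1 / real j)" if "j \<in> {1..<k}" for j
  proof -
    have "(\<Sum>t\<in>{k - 1 - j..<k}. C) = (real j + 1) * C" using that by simp
    then show ?thesis using that by (simp add: divide_simps)
  qed
  have "(\<Sum>j\<in>{1..<k}. (\<Sum>t\<in>{k - 1 - j..<k}. \<eta> t * G + 2 * vs) / (real j * (real j + 1)))
      = (\<Sum>j\<in>{1..<k}. C * (1 / real j))"
    unfolding \<eta> e_def[symmetric] C_def[symmetric] by (rule sum.cong[OF refl win])
  also have "\<dots> = C * harm (k - 1)" unfolding harm_eq_sum_atLeastLessThan[OF k] by (rule sum_distrib_left[symmetric])
  finally have "pmd_rate \<eta> D0 G vs k = (D0 / e + k * C) / k + C * harm (k - 1)"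
    unfolding pmd_rate_def last_iterate_comb_def by (simp add: \<eta> e_def C_def)
  also have "\<dots> = D0 / (e * k) + C * (1 + harm (k - 1))" using k by (simp add: field_simps)
  also have "\<dots> \<le> D0 / \<alpha> / sqrt (real k) + C * (2 * ln (2 * real k))"
  proof -
    have "e * real k = \<alpha> * sqrt (real k)"
      unfolding e_def using sk real_sqrt_mult_self[of "real k"] by (simp add: field_simps)
    then have "D0 / (e * k) = D0 / \<alpha> / sqrt (real k)" by simp
    moreover have "C * (1 + harm (k - 1)) \<le> C * (2 * ln (2 * real k))"
      using one_add_harm_le[OF k] \<open>C \<ge> 0\<close> by (rule mult_left_mono)
    ultimately show ?thesis by linarith
  qed
  also have "\<dots> \<le> D0 / \<alpha> / sqrt (real k) + 2 * \<alpha> * G * ln (2 * real k) / sqrt (real k)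
      + 4 * vs * (sqrt 2 + 8 * sqrt (real k))"
    using mult_left_mono[OF ln_le_sqrt2_add[OF k], of "4 * vs"] vs
    by (simp add: C_def e_def algebra_simps)
  finally show ?thesis by (simp add: add_divide_distrib)
qed

lemma window_sum_decreasing_step_le:
  assumes \<mu>: "\<mu> > 0" and G: "G \<ge> 0" and \<eta>: "\<And>t. \<eta> t = 1 / (\<mu> * (real t + 1))"
    and j: "j \<in> {1..<k}"
  shows "(\<Sum>t\<in>{k - 1 - j..<k}. \<eta> t * G + 2 * vs) / (real j * (real j + 1))
      \<le> G / \<mu> * (1 / (real j * (real k - real j))) + 2 * vs * (1 / real j)"
proof -
  have j_pos: "real j > 0" "real k - real j > 0" using j by auto
  have "\<eta> t * G + 2 * vs \<le> G / (\<mu> * (real k - real j)) + 2 * vs" if "t \<in> {k - 1 - j..<k}" for t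
  proof -
    have "1 / (\<mu> * (real t + 1)) \<le> 1 / (\<mu> * (real k - real j))"
      using that j_pos \<mu> by (intro divide_left_mono mult_left_mono mult_pos_pos) auto
    then show ?thesis unfolding \<eta> using mult_right_mono[OF _ G] by fastforce
  qed
  then have "(\<Sum>t\<in>{k - 1 - j..<k}. \<eta> t * G + 2 * vs)
      \<le> real (card {k - 1 - j..<k}) * (G / (\<mu> * (real k - real j)) + 2 * vs)"
    by (rule sum_bounded_above)
  also have "real (card {k - 1 - j..<k}) = real j + 1" using j by simp
  finally have "(\<Sum>t\<in>{k - 1 - j..<k}. \<eta> t * G + 2 * vs) / (real j * (real j + 1))
      \<le> (real j + 1) * (G / (\<mu> * (real k - real j)) + 2 * vs) / (real j * (real j + 1))"
    by (rule divide_right_mono) (use j_pos in simp)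
  also have "\<dots> = (G / (\<mu> * (real k - real j)) + 2 * vs) / real j"
    using j_pos by simp
  also have "\<dots> = G / \<mu> * (1 / (real j * (real k - real j))) + 2 * vs * (1 / real j)"
    by (simp add: add_divide_distrib divide_divide_eq_left mult.commute)
  finally show ?thesis .
qed

lemma pmd_rate_decreasing_step:
  assumes \<mu>: "\<mu> > 0" and k: "k \<ge> 1" and G: "G \<ge> 0" and vs: "vs \<ge> 0"
    and \<eta>: "\<And>t. \<eta> t = 1 / (\<mu> * (real t + 1))"
  shows "pmd_rate \<eta> D0 G vs k \<le> (\<mu> * D0 + 3 * G * ln (2 * real k) / \<mu>) / real k + 4 * vs * ln (2 * real k)"
proof -
  have avg: "(\<Sum>t\<in>{0..<k}. \<eta> t * G + 2 * vs) = G / \<mu> * harm k + 2 * vs * real k"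
  proof -
    have "(\<Sum>t\<in>{0..<k}. \<eta> t * G + 2 * vs) = G / \<mu> * (\<Sum>t<k. inverse (real (Suc t))) + 2 * vs * real k"
      by (simp add: \<eta> sum.distrib sum_distrib_left atLeast0LessThan field_simps)
    then show ?thesis by (simp add: harm_altdef)
  qed
  have "pmd_rate \<eta> D0 G vs k
      \<le> (\<mu> * D0 + (G / \<mu> * harm k + 2 * vs * real k)) / real k
        + (\<Sum>j\<in>{1..<k}. G / \<mu> * (1 / (real j * (real k - real j))) + 2 * vs * (1 / real j))"
  proof -
    have "D0 / \<eta> 0 = \<mu> * D0" by (simp add: \<eta>)
    then show ?thesis unfolding pmd_rate_def last_iterate_comb_def avg
      by (simp only:) (intro add_left_mono sum_mono window_sum_decreasing_step_le[OF \<mu> G \<eta>])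
  qed
  also have "\<dots> = (\<mu> * D0 + (G / \<mu> * harm k + 2 * vs * real k)) / real k
        + (G / \<mu> * (2 * harm (k - 1) / real k) + 2 * vs * harm (k - 1))"
    by (simp only: sum.distrib sum_distrib_left[symmetric] sum_inverse_mult_complement[OF k]
        harm_eq_sum_atLeastLessThan[OF k, symmetric])
  also have "\<dots> = (\<mu> * D0 + G / \<mu> * (harm k + 2 * harm (k - 1))) / real k + 2 * vs * (1 + harm (k - 1))"
    using k \<mu> by (simp add: field_simps)
  also have "\<dots> \<le> (\<mu> * D0 + G / \<mu> * (3 * ln (2 * real k))) / real k + 2 * vs * (2 * ln (2 * real k))"
    using harm_add_twice_harm_le[OF k] one_add_harm_le[OF k] G \<mu> vs
    by (intro add_mono divide_right_mono mult_left_mono) auto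
  finally show ?thesis by (simp add: algebra_simps)
qed

section \<open>Stochastic policy mirror descent\<close>

lemma integral_last_iterate_comb_le:
  assumes "integrable M A" "\<And>j. j \<in> {1..<k} \<Longrightarrow> integrable M (W j)"
    and "(\<integral>x. A x \<partial>M) \<le> a" "\<And>j. j \<in> {1..<k} \<Longrightarrow> (\<integral>x. W j x \<partial>M) \<le> w j"
  shows "integrable M (\<lambda>x. last_iterate_comb k (A x) (\<lambda>j. W j x))"
    and "(\<integral>x. last_iterate_comb k (A x) (\<lambda>j. W j x) \<partial>M) \<le> last_iterate_comb k a w"
proof -
  show "integrable M (\<lambda>x. last_iterate_comb k (A x) (\<lambda>j. W j x))"
    unfolding last_iterate_comb_def using assms(1,2)
    by (intro Bochner_Integration.integrable_add integrable_divide Bochner_Integration.integrable_sum) auto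
  have "(\<integral>x. last_iterate_comb k (A x) (\<lambda>j. W j x) \<partial>M)
      = last_iterate_comb k (\<integral>x. A x \<partial>M) (\<lambda>j. \<integral>x. W j x \<partial>M)"
    unfolding last_iterate_comb_def using assms(1,2)
    by (subst Bochner_Integration.integral_add)
      (auto simp: Bochner_Integration.integral_sum intro!: Bochner_Integration.integrable_sum)
  also have "\<dots> \<le> last_iterate_comb k a w"
    using assms by (intro last_iterate_comb_mono)
  finally show "(\<integral>x. last_iterate_comb k (A x) (\<lambda>j. W j x) \<partial>M) \<le> last_iterate_comb k a w" .
qed

lemma space_hist_alg [simp]: "space (hist_alg M X \<xi> t) = space M"
  unfolding hist_alg_def by (simp add: space_measure_of_conv)

lemma sets_hist_alg_le:
  assumes "\<And>t. \<xi> t \<in> measurable M X" "t \<le> t'"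
  shows "sets (hist_alg M X \<xi> t) \<subseteq> sets (hist_alg M X \<xi> t')" "sets (hist_alg M X \<xi> t) \<subseteq> sets M"
proof -
  let ?G = "\<lambda>t. {\<xi> i -` A \<inter> space M | i A. i < t \<and> A \<in> sets X}"
  have G: "?G t \<subseteq> Pow (space M)" for t by auto
  have "?G t \<subseteq> ?G t'" using assms(2) by (blast intro: order.strict_trans2)
  then show "sets (hist_alg M X \<xi> t) \<subseteq> sets (hist_alg M X \<xi> t')"
    unfolding hist_alg_def sets_measure_of[OF G] by (rule sigma_sets_mono')
  have "?G t \<subseteq> sets M" using assms(1) by (auto intro: measurable_sets)
  then show "sets (hist_alg M X \<xi> t) \<subseteq> sets M"
    unfolding hist_alg_def sets_measure_of[OF G] by (rule sets.sigma_sets_subset)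
qed

context sigma_finite_subalgebra
begin

lemma integral_mult_cond_exp_diff:
  assumes f: "integrable M f" and Y: "Y \<in> borel_measurable F" and B: "\<And>x. x \<in> space M \<Longrightarrow> \<bar>Y x\<bar> \<le> B"
  shows "integrable M (\<lambda>x. Y x * (real_cond_exp M F f x - f x))"
    and "(\<integral>x. Y x * (real_cond_exp M F f x - f x) \<partial>M) = 0"
proof -
  have [measurable]: "Y \<in> borel_measurable M" using measurable_from_subalg[OF subalg Y] .
  have "integrable M (\<lambda>x. Y x * f x)"
  proof (rule Bochner_Integration.integrable_bound)
    show "integrable M (\<lambda>x. B * f x)" using f by simp
    have "\<bar>Y x\<bar> * \<bar>f x\<bar> \<le> \<bar>B\<bar> * \<bar>f x\<bar>" if "x \<in> space M" for x
      using B[OF that] by (intro mult_right_mono) auto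
    then show "AE x in M. norm (Y x * f x) \<le> norm (B * f x)" by (intro AE_I2) (simp add: abs_mult)
  qed (use f in simp)
  moreover note real_cond_exp_intg[OF this Y borel_measurable_integrable[OF f]]
  ultimately show "integrable M (\<lambda>x. Y x * (real_cond_exp M F f x - f x))"
    and "(\<integral>x. Y x * (real_cond_exp M F f x - f x) \<partial>M) = 0"
    by (simp_all add: right_diff_distrib)
qed

lemma integral_le_of_nn_cond_exp_le:
  assumes "prob_space M" "g \<in> borel_measurable M" "\<And>x. 0 \<le> g x" "0 \<le> c"
    and "AE x in M. nn_cond_exp M F (\<lambda>x. ennreal (g x)) x \<le> ennreal c"
  shows "integrable M g" "(\<integral>x. g x \<partial>M) \<le> c"
proof -
  have "(\<integral>\<^sup>+ x. ennreal (g x) \<partial>M) = (\<integral>\<^sup>+ x. 1 * nn_cond_exp M F (\<lambda>x. ennreal (g x)) x \<partial>M)"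
    using assms(2) by (subst nn_cond_exp_intg) auto
  also have "\<dots> \<le> (\<integral>\<^sup>+ x. ennreal c \<partial>M)"
    using assms(5) by (intro nn_integral_mono_AE) auto
  also have "\<dots> = ennreal c" using prob_space.emeasure_space_1[OF assms(1)] by simp
  finally have nn: "(\<integral>\<^sup>+ x. ennreal (g x) \<partial>M) \<le> ennreal c" .
  then show "integrable M g"
    using assms(2,3) by (intro integrableI_nonneg) (auto intro: le_less_trans[OF nn])
  show "(\<integral>x. g x \<partial>M) \<le> c" by (rule integral_real_bounded[OF assms(4) nn])
qed

end

locale spmd = pmd_setting P c \<gamma> nrm \<omega> g\<omega> h \<mu> Mh
  for P :: "'s::finite \<Rightarrow> 'a::finite \<Rightarrow> 's \<Rightarrow> real" and c \<gamma> nrm \<omega> g\<omega> h \<mu> Mh +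
  fixes M :: "'w measure" and X :: "'x measure" and \<xi> :: "nat \<Rightarrow> 'w \<Rightarrow> 'x"
    and Qt :: "nat \<Rightarrow> 'w \<Rightarrow> 's \<Rightarrow> real ^ 'a" and pol :: "nat \<Rightarrow> 'w \<Rightarrow> 's \<Rightarrow> real ^ 'a"
    and \<pi>0 :: "'s \<Rightarrow> real ^ 'a" and \<eta> :: "nat \<Rightarrow> real" and vs Qbar :: real
  assumes norm_simplex: "\<forall>p\<in>prob_simplex. nrm p \<le> 1"
    and prob: "prob_space M"
    and xi_meas: "\<forall>t. \<xi> t \<in> measurable M X"
    and pi0: "is_policy \<pi>0" "\<forall>w\<in>space M. pol 0 w = \<pi>0"
    and pol_meas: "\<forall>t s a. (\<lambda>w. pol t w s $ a) \<in> borel_measurable (hist_alg M X \<xi> t)"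
    and Qt_meas: "\<forall>t s a. (\<lambda>w. Qt t w s $ a) \<in> borel_measurable (hist_alg M X \<xi> (Suc t))"
    and spmd: "\<forall>t. \<forall>w\<in>space M. \<forall>s. pol (Suc t) w s \<in> prob_simplex \<and>
       (\<forall>p\<in>prob_simplex.
          \<eta> t * (Qt t w s \<bullet> pol (Suc t) w s + h s (pol (Suc t) w s))
            + bregman \<omega> g\<omega> (pol (Suc t) w s) (pol t w s)
          \<le> \<eta> t * (Qt t w s \<bullet> p + h s p) + bregman \<omega> g\<omega> p (pol t w s))"
    and vs: "0 \<le> vs"
    and A_bias: "\<forall>t. AE w in M. dual_normF nrm (\<lambda>s. \<chi> a.
         real_cond_exp M (hist_alg M X \<xi> t) (\<lambda>w'. Qt t w' s $ a) w
         - Qfun P c h \<gamma> (pol t w) s $ a) \<le> vs"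
    and A_mom: "\<forall>t. AE w in M. nn_cond_exp M (hist_alg M X \<xi> t)
         (\<lambda>w'. ennreal ((dual_normF nrm (Qt t w'))\<^sup>2)) w \<le> ennreal (Qbar\<^sup>2)"
    and \<eta>_pos: "\<forall>t. \<eta> t > 0" and \<eta>_step: "\<forall>t. 1 / \<eta> (Suc t) \<le> 1 / \<eta> t + \<mu>"
begin

abbreviation F :: "nat \<Rightarrow> 'w measure" where "F t \<equiv> hist_alg M X \<xi> t"

lemma subalgebra_F_le: "t \<le> t' \<Longrightarrow> subalgebra (F t') (F t)"
  unfolding subalgebra_def using sets_hist_alg_le(1)[of \<xi> M X t t'] xi_meas by auto

lemma subalgebra_F: "subalgebra M (F t)"
  unfolding subalgebra_def using sets_hist_alg_le(2)[of \<xi> M X t t] xi_meas by auto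

lemma sigma_finite_subalgebra_F: "sigma_finite_subalgebra M (F t)"
  using prob_space.finite_measure[OF prob] subalgebra_F
  by (intro finite_measure_subalgebra_is_sigma_finite)
    (simp add: finite_measure_subalgebra_def finite_measure_subalgebra_axioms_def)

lemma pol_policy: "w \<in> space M \<Longrightarrow> is_policy (pol t w)"
  using pi0 spmd by (cases t) (auto simp: is_policy_def)

lemma pol_measurable_F: "t \<le> t' \<Longrightarrow> (\<lambda>w. pol t w s $ a) \<in> borel_measurable (F t')"
  using measurable_from_subalg[OF subalgebra_F_le] pol_meas by blast

lemma Qt_measurable [measurable]: "(\<lambda>w. Qt t w s $ a) \<in> borel_measurable M"
  using measurable_from_subalg[OF subalgebra_F] Qt_meas by blast

definition Qsq :: "nat \<Rightarrow> 'w \<Rightarrow> real" where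
  "Qsq t w = (dual_normF nrm (Qt t w))\<^sup>2"

lemma Qt_vec_measurable: "(\<lambda>w. Qt t w s) \<in> borel_measurable M"
proof (subst borel_measurable_euclidean_space, intro ballI)
  fix i :: "real ^ 'a" assume "i \<in> Basis"
  then obtain a where "i = axis a 1" by (auto simp: Basis_vec_def)
  then show "(\<lambda>w. Qt t w s \<bullet> i) \<in> borel_measurable M"
    using Qt_measurable[of t s a] by (simp add: cart_eq_inner_axis)
qed

lemma dual_normF_Qt_measurable: "(\<lambda>w. dual_normF nrm (Qt t w)) \<in> borel_measurable M"
proof -
  have "(\<lambda>w. dual_norm nrm (Qt t w s)) \<in> borel_measurable M" for s
    by (rule borel_measurable_continuous_on[OF continuous_on_dual_norm[OF nrm] Qt_vec_measurable])
  then show ?thesis unfolding dual_normF_def by (intro borel_measurable_Max) auto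
qed

lemma Qsq_measurable: "Qsq t \<in> borel_measurable M"
  unfolding Qsq_def by (intro borel_measurable_power dual_normF_Qt_measurable)

lemma Qsq_integrable: "integrable M (Qsq t)" and Qsq_integral_le: "(\<integral>w. Qsq t w \<partial>M) \<le> Qbar\<^sup>2"
proof -
  have ae: "AE w in M. nn_cond_exp M (F t) (\<lambda>w. ennreal (Qsq t w)) w \<le> ennreal (Qbar\<^sup>2)"
    using A_mom unfolding Qsq_def by blast
  show "integrable M (Qsq t)" "(\<integral>w. Qsq t w \<partial>M) \<le> Qbar\<^sup>2"
    by (intro sigma_finite_subalgebra.integral_le_of_nn_cond_exp_le[OF
          sigma_finite_subalgebra_F prob Qsq_measurable _ _ ae]; simp add: Qsq_def)+
qed

lemma Qt_integrable: "integrable M (\<lambda>w. Qt t w s $ a)"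
proof (rule Bochner_Integration.integrable_bound)
  show "integrable M (\<lambda>w. nrm (axis a 1) * dual_normF nrm (Qt t w))"
    using finite_measure.square_integrable_imp_integrable[OF prob_space.finite_measure[OF prob]
        dual_normF_Qt_measurable Qsq_integrable[unfolded Qsq_def]]
    by simp
  have "\<bar>Qt t w s $ a\<bar> \<le> nrm (axis a 1) * dual_normF nrm (Qt t w)" for w
    using abs_component_le_dual_norm[OF nrm, of "Qt t w s" a] dual_norm_le_dual_normF[of nrm "Qt t w" s]
      norm_fn_nonneg[OF nrm, of "axis a 1"] by (meson mult_left_mono order_trans)
  moreover have "0 \<le> nrm (axis a 1) * dual_normF nrm (Qt t w)" for w
    by (intro mult_nonneg_nonneg dual_normF_nonneg[OF nrm] norm_fn_nonneg[OF nrm])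
  ultimately show "AE w in M. norm (Qt t w s $ a) \<le> norm (nrm (axis a 1) * dual_normF nrm (Qt t w))"
    by (intro AE_I2) simp
qed simp


definition cond_Qt :: "nat \<Rightarrow> 's \<Rightarrow> 'a \<Rightarrow> 'w \<Rightarrow> real" where
  "cond_Qt t s a = real_cond_exp M (F t) (\<lambda>w. Qt t w s $ a)"

text \<open>The estimation error minus its bias: a martingale difference, weighted by the occupancy
  measure of the comparator.\<close>
definition noise :: "('s \<Rightarrow> real ^ 'a) \<Rightarrow> 's \<Rightarrow> nat \<Rightarrow> 'w \<Rightarrow> real" where
  "noise p s0 t w = (\<Sum>s\<in>UNIV. \<Sum>a\<in>UNIV.
     occupancy P \<gamma> p s0 s * (pol t w s $ a - p s $ a) * (cond_Qt t s a w - Qt t w s $ a))"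

lemma noise_integrable_mean_zero:
  assumes p_meas: "\<And>s a. (\<lambda>w. p w s $ a) \<in> borel_measurable (F t)"
    and p: "\<And>w. w \<in> space M \<Longrightarrow> is_policy (p w)"
  shows "integrable M (\<lambda>w. noise (p w) s0 t w)" "(\<integral>w. noise (p w) s0 t w \<partial>M) = 0"
proof -
  interpret sigma_finite_subalgebra M "F t" by (rule sigma_finite_subalgebra_F)
  define Y where "Y s a w = occupancy P \<gamma> (p w) s0 s * (pol t w s $ a - p w s $ a)" for s a w
  have "Y s a \<in> borel_measurable (F t)" for s a
    unfolding Y_def using measurable_occupancy[OF p_meas] pol_measurable_F[of t t] p_meas by measurable
  moreover have "\<bar>Y s a w\<bar> \<le> 1 / (1 - \<gamma>) * 1" if w: "w \<in> space M" for s a w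
  proof -
    have "\<bar>pol t w s $ a - p w s $ a\<bar> \<le> 1"
      using policy_nonneg[OF pol_policy[OF w, of t], of s a] policy_le_1[OF pol_policy[OF w, of t], of s a]
        policy_nonneg[OF p[OF w], of s a] policy_le_1[OF p[OF w], of s a]
      by (simp add: abs_le_iff)
    then show ?thesis
      unfolding Y_def abs_mult using occupancy_nonneg[OF P p[OF w] \<gamma>] occupancy_le[OF P p[OF w] \<gamma>] \<gamma>
      by (intro mult_mono) auto
  qed
  ultimately have "integrable M (\<lambda>w. Y s a w * (cond_Qt t s a w - Qt t w s $ a))"
    "(\<integral>w. Y s a w * (cond_Qt t s a w - Qt t w s $ a) \<partial>M) = 0" for s a
    unfolding cond_Qt_def using integral_mult_cond_exp_diff[OF Qt_integrable] by blast+
  then show "integrable M (\<lambda>w. noise (p w) s0 t w)" "(\<integral>w. noise (p w) s0 t w \<partial>M) = 0"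
    unfolding noise_def Y_def[symmetric] by (simp_all add: Bochner_Integration.integral_sum)
qed

text \<open>Splitting \<open>Q - Qt = (Q - E[Qt]) + (E[Qt] - Qt)\<close>: the first part is the bias, bounded with
  Hoelder since \<open>\<parallel>\<pi>\<^sub>t - p\<parallel> \<le> 2\<close>.\<close>
lemma error_le_bias_add_noise:
  assumes w: "w \<in> space M" and p: "is_policy p"
    and bias: "dual_normF nrm (\<lambda>s. \<chi> a. cond_Qt t s a w - Qfun P c h \<gamma> (pol t w) s $ a) \<le> vs"
  shows "discounted_op P \<gamma> p (\<lambda>s. (Qfun P c h \<gamma> (pol t w) s - Qt t w s) \<bullet> (pol t w s - p s)) s0
     \<le> 2 * vs / (1 - \<gamma>) + noise p s0 t w"
proof -
  define E where "E s = (\<chi> a. cond_Qt t s a w)" for s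
  define Q where "Q s = Qfun P c h \<gamma> (pol t w) s" for s
  define d where "d s = pol t w s - p s" for s
  have pw: "(Q s - Qt t w s) \<bullet> d s \<le> 2 * vs + (E s - Qt t w s) \<bullet> d s" for s
  proof -
    have "(\<lambda>s. E s - Q s) = (\<lambda>s. \<chi> a. cond_Qt t s a w - Qfun P c h \<gamma> (pol t w) s $ a)"
      by (auto simp: vec_eq_iff E_def Q_def)
    then have "dual_norm nrm (E s - Q s) \<le> vs"
      using dual_norm_le_dual_normF[of nrm "\<lambda>s. E s - Q s" s] bias by simp
    moreover have "nrm (- d s) \<le> 2"
    proof -
      have "nrm (p s) \<le> 1" "nrm (pol t w s) \<le> 1"
        using norm_simplex p pol_policy[OF w, of t] by (auto simp: is_policy_def)
      then show ?thesis
        using norm_fn_triangle[OF nrm, of "p s" "- pol t w s"] by (simp add: d_def norm_fn_minus[OF nrm])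
    qed
    ultimately have "dual_norm nrm (E s - Q s) * nrm (- d s) \<le> vs * 2"
      using vs norm_fn_nonneg[OF nrm] by (intro mult_mono) auto
    then have "(E s - Q s) \<bullet> (- d s) \<le> vs * 2"
      using inner_le_dual_norm_mult[OF nrm, of "E s - Q s" "- d s"] by linarith
    then show ?thesis by (simp add: inner_diff_left inner_minus_right algebra_simps)
  qed
  have "discounted_op P \<gamma> p (\<lambda>s. (Q s - Qt t w s) \<bullet> d s) s0
      \<le> discounted_op P \<gamma> p (\<lambda>_. 2 * vs) s0 + discounted_op P \<gamma> p (\<lambda>s. (E s - Qt t w s) \<bullet> d s) s0"
    using discounted_op_mono[OF P p \<gamma> pw] by (simp add: discounted_op_add[OF P p \<gamma>])
  also have "discounted_op P \<gamma> p (\<lambda>s. (E s - Qt t w s) \<bullet> d s) s0 = noise p s0 t w"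
    unfolding discounted_op_eq_occupancy_sum[OF P p \<gamma>] noise_def
    by (simp add: inner_vec_def E_def d_def sum_distrib_left mult_ac)
  finally show ?thesis unfolding Q_def d_def discounted_op_const[OF P p \<gamma>] by simp
qed

definition step_bound :: "('s \<Rightarrow> real ^ 'a) \<Rightarrow> 's \<Rightarrow> nat \<Rightarrow> 'w \<Rightarrow> real" where
  "step_bound p s0 t w = (\<eta> t * (Qsq t w + Mh\<^sup>2) + 2 * vs) / (1 - \<gamma>) + noise p s0 t w"

lemma step_bound_integral:
  assumes "\<And>s a. (\<lambda>w. p w s $ a) \<in> borel_measurable (F t)" "\<And>w. w \<in> space M \<Longrightarrow> is_policy (p w)"
  shows "integrable M (\<lambda>w. step_bound (p w) s0 t w)"
    and "(\<integral>w. step_bound (p w) s0 t w \<partial>M) \<le> (\<eta> t * (Qbar\<^sup>2 + Mh\<^sup>2) + 2 * vs) / (1 - \<gamma>)"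
proof -
  note noise = noise_integrable_mean_zero[OF assms, of s0]
  have fin: "finite_measure M" by (rule prob_space.finite_measure[OF prob])
  have eq: "(\<lambda>w. step_bound (p w) s0 t w)
      = (\<lambda>w. \<eta> t / (1 - \<gamma>) * Qsq t w + ((\<eta> t * Mh\<^sup>2 + 2 * vs) / (1 - \<gamma>) + noise (p w) s0 t w))"
    by (rule ext) (simp add: step_bound_def add_divide_distrib algebra_simps)
  have i1: "integrable M (\<lambda>w. \<eta> t / (1 - \<gamma>) * Qsq t w)" by (intro integrable_mult_right Qsq_integrable)
  have i2: "integrable M (\<lambda>w. (\<eta> t * Mh\<^sup>2 + 2 * vs) / (1 - \<gamma>) + noise (p w) s0 t w)"
    using fin noise(1) by (intro Bochner_Integration.integrable_add finite_measure.integrable_const)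
  show "integrable M (\<lambda>w. step_bound (p w) s0 t w)"
    unfolding eq by (rule Bochner_Integration.integrable_add[OF i1 i2])
  have "(\<integral>w. step_bound (p w) s0 t w \<partial>M)
      = (\<integral>w. \<eta> t / (1 - \<gamma>) * Qsq t w \<partial>M) + (\<integral>w. (\<eta> t * Mh\<^sup>2 + 2 * vs) / (1 - \<gamma>) + noise (p w) s0 t w \<partial>M)"
    unfolding eq by (rule Bochner_Integration.integral_add[OF i1 i2])
  also have "\<dots> = \<eta> t / (1 - \<gamma>) * (\<integral>w. Qsq t w \<partial>M) + (\<eta> t * Mh\<^sup>2 + 2 * vs) / (1 - \<gamma>)"
    using fin noise prob_space.prob_space[OF prob]
    by (simp add: Bochner_Integration.integral_add finite_measure.integrable_const)
  also have "\<dots> \<le> \<eta> t / (1 - \<gamma>) * Qbar\<^sup>2 + (\<eta> t * Mh\<^sup>2 + 2 * vs) / (1 - \<gamma>)"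
    using Qsq_integral_le \<eta>_pos \<gamma> by (intro add_right_mono mult_left_mono) (auto simp: less_imp_le)
  also have "\<dots> = (\<eta> t * (Qbar\<^sup>2 + Mh\<^sup>2) + 2 * vs) / (1 - \<gamma>)"
    by (simp add: add_divide_distrib algebra_simps)
  finally show "(\<integral>w. step_bound (p w) s0 t w \<partial>M) \<le> (\<eta> t * (Qbar\<^sup>2 + Mh\<^sup>2) + 2 * vs) / (1 - \<gamma>)" .
qed

lemma window_sum_le_step_bounds:
  assumes w: "w \<in> space M" and p: "is_policy p" and "m \<le> k"
    and bias: "\<And>t. dual_normF nrm (\<lambda>s. \<chi> a. cond_Qt t s a w - Qfun P c h \<gamma> (pol t w) s $ a) \<le> vs"
  shows "(\<Sum>t\<in>{m..<k}. Vfun P c h \<gamma> (pol t w) s0 - Vfun P c h \<gamma> p s0)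
     \<le> (1 / \<eta> m) * occ_bregman p (pol m w) s0 + (\<Sum>t\<in>{m..<k}. step_bound p s0 t w)"
proof -
  have "(\<Sum>t\<in>{m..<k}. Vfun P c h \<gamma> (pol t w) s0 - Vfun P c h \<gamma> p s0)
     \<le> (1 / \<eta> m) * occ_bregman p (pol m w) s0
       + (\<Sum>t\<in>{m..<k}. \<eta> t * (Qsq t w + Mh\<^sup>2) / (1 - \<gamma>)
            + discounted_op P \<gamma> p (\<lambda>s. (Qfun P c h \<gamma> (pol t w) s - Qt t w s) \<bullet> (pol t w s - p s)) s0)"
    unfolding Qsq_def using pol_policy[OF w] p \<eta>_pos \<eta>_step \<open>m \<le> k\<close> spmd w
    by (intro window_value_sum) auto
  also have "\<dots> \<le> (1 / \<eta> m) * occ_bregman p (pol m w) s0 + (\<Sum>t\<in>{m..<k}. step_bound p s0 t w)"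
    using error_le_bias_add_noise[OF w p bias]
    by (intro add_left_mono sum_mono) (simp add: step_bound_def add_divide_distrib)
  finally show ?thesis .
qed

definition last_iterate_majorant :: "('s \<Rightarrow> real ^ 'a) \<Rightarrow> real \<Rightarrow> 's \<Rightarrow> nat \<Rightarrow> 'w \<Rightarrow> real" where
  "last_iterate_majorant p D0 s0 k w = last_iterate_comb k
     (D0 / \<eta> 0 / (1 - \<gamma>) + (\<Sum>t\<in>{0..<k}. step_bound p s0 t w))
     (\<lambda>j. \<Sum>t\<in>{k - 1 - j..<k}. step_bound (pol (k - 1 - j) w) s0 t w)"

text \<open>The average of all iterates is compared with \<open>p\<close>, where the initial Bregman term is at most
  \<open>D0\<close>; each trailing window is compared with its own first iterate, where it vanishes.\<close>
lemma last_iterate_gap_le_majorant: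
  assumes w: "w \<in> space M" and p: "is_policy p" and k: "k \<ge> 1"
    and D0: "\<And>s. bregman \<omega> g\<omega> (p s) (\<pi>0 s) \<le> D0"
    and bias: "\<And>t. dual_normF nrm (\<lambda>s. \<chi> a. cond_Qt t s a w - Qfun P c h \<gamma> (pol t w) s $ a) \<le> vs"
  shows "Vfun P c h \<gamma> (pol (k - 1) w) s0 - Vfun P c h \<gamma> p s0 \<le> last_iterate_majorant p D0 s0 k w"
proof -
  define v where "v t = Vfun P c h \<gamma> (pol t w) s0 - Vfun P c h \<gamma> p s0" for t
  have "(\<Sum>t\<in>{0..<k}. v t) \<le> D0 / \<eta> 0 / (1 - \<gamma>) + (\<Sum>t\<in>{0..<k}. step_bound p s0 t w)"
  proof -
    have "occ_bregman p (pol 0 w) s0 \<le> D0 / (1 - \<gamma>)"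
      unfolding occ_bregman_def using D0 pi0(2) w discounted_op_mono[OF P p \<gamma>, of _ "\<lambda>_. D0"]
      by (simp add: discounted_op_const[OF P p \<gamma>])
    then have "occ_bregman p (pol 0 w) s0 / \<eta> 0 \<le> D0 / (1 - \<gamma>) / \<eta> 0"
      using \<eta>_pos by (intro divide_right_mono) (auto simp: less_imp_le)
    also have "\<dots> = D0 / \<eta> 0 / (1 - \<gamma>)" by (simp add: mult.commute)
    finally have "(1 / \<eta> 0) * occ_bregman p (pol 0 w) s0 \<le> D0 / \<eta> 0 / (1 - \<gamma>)" by simp
    moreover have "(\<Sum>t\<in>{0..<k}. v t)
        \<le> (1 / \<eta> 0) * occ_bregman p (pol 0 w) s0 + (\<Sum>t\<in>{0..<k}. step_bound p s0 t w)"
      unfolding v_def by (rule window_sum_le_step_bounds[OF w p zero_le bias])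
    ultimately show ?thesis by linarith
  qed
  moreover have "(\<Sum>t\<in>{m..<k}. v t - v m) \<le> (\<Sum>t\<in>{m..<k}. step_bound (pol m w) s0 t w)" if "m \<le> k" for m
    using window_sum_le_step_bounds[OF w pol_policy[OF w, of m] that bias]
    unfolding v_def occ_bregman_self[OF pol_policy[OF w, of m]] by simp
  ultimately show ?thesis
    unfolding last_iterate_majorant_def v_def[symmetric] last_iterate_comb_eq[OF k, of v]
    by (intro last_iterate_comb_mono) auto
qed

lemma last_iterate_majorant_integral:
  assumes p: "is_policy p"
  shows "integrable M (last_iterate_majorant p D0 s0 k)"
    and "(\<integral>w. last_iterate_majorant p D0 s0 k w \<partial>M) \<le> pmd_rate \<eta> D0 (Qbar\<^sup>2 + Mh\<^sup>2) vs k / (1 - \<gamma>)"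
proof -
  define b where "b t = (\<eta> t * (Qbar\<^sup>2 + Mh\<^sup>2) + 2 * vs) / (1 - \<gamma>)" for t
  have step_p: "integrable M (\<lambda>w. step_bound p s0 t w)" "(\<integral>w. step_bound p s0 t w \<partial>M) \<le> b t" for t
    using step_bound_integral[of "\<lambda>_. p"] p unfolding b_def by auto
  have step_pol: "integrable M (\<lambda>w. step_bound (pol m w) s0 t w)"
    "(\<integral>w. step_bound (pol m w) s0 t w \<partial>M) \<le> b t" if "m \<le> t" for m t
    using step_bound_integral[of "pol m"] pol_measurable_F[OF that] pol_policy unfolding b_def by auto
  have i_sum: "integrable M (\<lambda>w. \<Sum>t\<in>{0..<k}. step_bound p s0 t w)"
    by (intro Bochner_Integration.integrable_sum step_p)
  have i_const: "integrable M (\<lambda>w. D0 / \<eta> 0 / (1 - \<gamma>))"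
    by (rule finite_measure.integrable_const[OF prob_space.finite_measure[OF prob]])
  have avg: "integrable M (\<lambda>w. D0 / \<eta> 0 / (1 - \<gamma>) + (\<Sum>t\<in>{0..<k}. step_bound p s0 t w))"
    by (rule Bochner_Integration.integrable_add[OF i_const i_sum])
  have avg_le: "(\<integral>w. D0 / \<eta> 0 / (1 - \<gamma>) + (\<Sum>t\<in>{0..<k}. step_bound p s0 t w) \<partial>M)
      \<le> D0 / \<eta> 0 / (1 - \<gamma>) + (\<Sum>t\<in>{0..<k}. b t)"
    using Bochner_Integration.integral_add[OF i_const i_sum] prob_space.prob_space[OF prob] step_p(2)
    by (auto intro: sum_mono simp: Bochner_Integration.integral_sum step_p(1))
  have win: "integrable M (\<lambda>w. \<Sum>t\<in>{k - 1 - j..<k}. step_bound (pol (k - 1 - j) w) s0 t w)"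
    "(\<integral>w. (\<Sum>t\<in>{k - 1 - j..<k}. step_bound (pol (k - 1 - j) w) s0 t w) \<partial>M) \<le> (\<Sum>t\<in>{k - 1 - j..<k}. b t)"
    for j
    using step_pol
    by (auto intro!: Bochner_Integration.integrable_sum sum_mono simp: Bochner_Integration.integral_sum)
  show "integrable M (last_iterate_majorant p D0 s0 k)"
    unfolding last_iterate_majorant_def by (rule integral_last_iterate_comb_le(1)[OF avg win(1) avg_le win(2)])
  have "(\<integral>w. last_iterate_majorant p D0 s0 k w \<partial>M)
      \<le> last_iterate_comb k (D0 / \<eta> 0 / (1 - \<gamma>) + (\<Sum>t\<in>{0..<k}. b t)) (\<lambda>j. \<Sum>t\<in>{k - 1 - j..<k}. b t)"
    unfolding last_iterate_majorant_def by (rule integral_last_iterate_comb_le(2)[OF avg win(1) avg_le win(2)])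
  also have "\<dots> = pmd_rate \<eta> D0 (Qbar\<^sup>2 + Mh\<^sup>2) vs k / (1 - \<gamma>)"
    unfolding pmd_rate_def b_def sum_divide_distrib[symmetric] add_divide_distrib[symmetric]
    by (rule last_iterate_comb_divide)
  finally show "(\<integral>w. last_iterate_majorant p D0 s0 k w \<partial>M) \<le> pmd_rate \<eta> D0 (Qbar\<^sup>2 + Mh\<^sup>2) vs k / (1 - \<gamma>)" .
qed

theorem expected_last_iterate_gap:
  assumes p: "is_policy p" and k: "k \<ge> 1" and "D0 \<ge> 0"
    and D0: "\<And>s. bregman \<omega> g\<omega> (p s) (\<pi>0 s) \<le> D0"
  shows "(\<integral>w. Vfun P c h \<gamma> (pol (k - 1) w) s0 - Vfun P c h \<gamma> p s0 \<partial>M)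
     \<le> pmd_rate \<eta> D0 (Qbar\<^sup>2 + Mh\<^sup>2) vs k / (1 - \<gamma>)"
proof (cases "integrable M (\<lambda>w. Vfun P c h \<gamma> (pol (k - 1) w) s0 - Vfun P c h \<gamma> p s0)")
  case True
  have "AE w in M. \<forall>t. dual_normF nrm (\<lambda>s. \<chi> a. cond_Qt t s a w - Qfun P c h \<gamma> (pol t w) s $ a) \<le> vs"
    using A_bias unfolding cond_Qt_def by (simp add: AE_all_countable)
  then have "AE w in M. Vfun P c h \<gamma> (pol (k - 1) w) s0 - Vfun P c h \<gamma> p s0 \<le> last_iterate_majorant p D0 s0 k w"
    using AE_space by eventually_elim (intro last_iterate_gap_le_majorant p k D0; simp)
  then have "(\<integral>w. Vfun P c h \<gamma> (pol (k - 1) w) s0 - Vfun P c h \<gamma> p s0 \<partial>M)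
      \<le> (\<integral>w. last_iterate_majorant p D0 s0 k w \<partial>M)"
    by (rule integral_mono_AE[OF True last_iterate_majorant_integral(1)[OF p]])
  then show ?thesis using last_iterate_majorant_integral(2)[OF p] by (rule order_trans)
next
  case False
  have "0 \<le> pmd_rate \<eta> D0 (Qbar\<^sup>2 + Mh\<^sup>2) vs k / (1 - \<gamma>)"
    unfolding pmd_rate_def using \<eta>_pos \<open>D0 \<ge> 0\<close> vs \<gamma>
    by (intro divide_nonneg_pos last_iterate_comb_nonneg add_nonneg_nonneg sum_nonneg) (auto simp: less_imp_le)
  then show ?thesis using not_integrable_integral_eq[OF False] by simp
qed

theorem expected_last_iterate_gap_constant_step:
  assumes \<alpha>: "\<alpha> > 0" and \<eta>: "\<forall>t. \<eta> t = \<alpha> / sqrt (real k)"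
    and p: "is_policy p" and k: "k \<ge> 1" and "D0 \<ge> 0" and D0: "\<And>s. bregman \<omega> g\<omega> (p s) (\<pi>0 s) \<le> D0"
  shows "(\<integral>w. Vfun P c h \<gamma> (pol (k - 1) w) s0 - Vfun P c h \<gamma> p s0 \<partial>M)
     \<le> (D0 / \<alpha> + 2 * \<alpha> * (Qbar\<^sup>2 + Mh\<^sup>2) * ln (2 * real k)) / ((1 - \<gamma>) * sqrt (real k))
       + 4 * vs * (sqrt 2 + 8 * sqrt (real k)) / (1 - \<gamma>)"
proof -
  have "pmd_rate \<eta> D0 (Qbar\<^sup>2 + Mh\<^sup>2) vs k
      \<le> (D0 / \<alpha> + 2 * \<alpha> * (Qbar\<^sup>2 + Mh\<^sup>2) * ln (2 * real k)) / sqrt (real k) + 4 * vs * (sqrt 2 + 8 * sqrt (real k))"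
    using \<eta> vs by (intro pmd_rate_constant_step[OF \<alpha> k]) simp_all
  then have "pmd_rate \<eta> D0 (Qbar\<^sup>2 + Mh\<^sup>2) vs k / (1 - \<gamma>)
      \<le> ((D0 / \<alpha> + 2 * \<alpha> * (Qbar\<^sup>2 + Mh\<^sup>2) * ln (2 * real k)) / sqrt (real k)
        + 4 * vs * (sqrt 2 + 8 * sqrt (real k))) / (1 - \<gamma>)"
    using \<gamma> by (simp add: divide_right_mono)
  with expected_last_iterate_gap[OF p k \<open>D0 \<ge> 0\<close> D0]
  have "(\<integral>w. Vfun P c h \<gamma> (pol (k - 1) w) s0 - Vfun P c h \<gamma> p s0 \<partial>M)
      \<le> ((D0 / \<alpha> + 2 * \<alpha> * (Qbar\<^sup>2 + Mh\<^sup>2) * ln (2 * real k)) / sqrt (real k)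
        + 4 * vs * (sqrt 2 + 8 * sqrt (real k))) / (1 - \<gamma>)"
    by (rule order_trans)
  then show ?thesis by (simp add: add_divide_distrib mult_ac)
qed

theorem expected_last_iterate_gap_decreasing_step:
  assumes \<mu>: "\<mu> > 0" and \<eta>: "\<forall>t. \<eta> t = 1 / (\<mu> * (real t + 1))"
    and p: "is_policy p" and k: "k \<ge> 1" and "D0 \<ge> 0" and D0: "\<And>s. bregman \<omega> g\<omega> (p s) (\<pi>0 s) \<le> D0"
  shows "(\<integral>w. Vfun P c h \<gamma> (pol (k - 1) w) s0 - Vfun P c h \<gamma> p s0 \<partial>M)
     \<le> (\<mu> * D0 + 3 * (Qbar\<^sup>2 + Mh\<^sup>2) * ln (2 * real k) / \<mu>) / ((1 - \<gamma>) * real k)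
       + 4 * vs * ln (2 * real k) / (1 - \<gamma>)"
proof -
  have "pmd_rate \<eta> D0 (Qbar\<^sup>2 + Mh\<^sup>2) vs k
      \<le> (\<mu> * D0 + 3 * (Qbar\<^sup>2 + Mh\<^sup>2) * ln (2 * real k) / \<mu>) / real k + 4 * vs * ln (2 * real k)"
    using \<eta> vs by (intro pmd_rate_decreasing_step[OF \<mu> k]) simp_all
  then have "pmd_rate \<eta> D0 (Qbar\<^sup>2 + Mh\<^sup>2) vs k / (1 - \<gamma>)
      \<le> ((\<mu> * D0 + 3 * (Qbar\<^sup>2 + Mh\<^sup>2) * ln (2 * real k) / \<mu>) / real k + 4 * vs * ln (2 * real k)) / (1 - \<gamma>)"
    using \<gamma> by (simp add: divide_right_mono)
  with expected_last_iterate_gap[OF p k \<open>D0 \<ge> 0\<close> D0]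
  have "(\<integral>w. Vfun P c h \<gamma> (pol (k - 1) w) s0 - Vfun P c h \<gamma> p s0 \<partial>M)
      \<le> ((\<mu> * D0 + 3 * (Qbar\<^sup>2 + Mh\<^sup>2) * ln (2 * real k) / \<mu>) / real k + 4 * vs * ln (2 * real k)) / (1 - \<gamma>)"
    by (rule order_trans)
  then show ?thesis by (simp add: add_divide_distrib mult_ac)
qed

end

theorem proposition5p3:
  fixes P :: "'s::finite \<Rightarrow> 'a::finite \<Rightarrow> 's \<Rightarrow> real"
    and c :: "'s \<Rightarrow> 'a \<Rightarrow> real"
    and \<gamma> :: real
    and nrm :: "real ^ 'a \<Rightarrow> real"
    and \<omega> :: "real ^ 'a \<Rightarrow> real"
    and g\<omega> :: "real ^ 'a \<Rightarrow> real ^ 'a"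
    and h :: "'s \<Rightarrow> real ^ 'a \<Rightarrow> real"
    and \<mu>h Mh :: real
    and pstar :: "'s \<Rightarrow> real ^ 'a"
    and M :: "'w measure" and X :: "'x measure"
    and \<xi> :: "nat \<Rightarrow> 'w \<Rightarrow> 'x"
    and Qt :: "nat \<Rightarrow> 'w \<Rightarrow> 's \<Rightarrow> real ^ 'a"
    and pol :: "nat \<Rightarrow> 'w \<Rightarrow> 's \<Rightarrow> real ^ 'a"
    and \<pi>0 :: "'s \<Rightarrow> real ^ 'a"
    and \<eta> :: "nat \<Rightarrow> real"
    and vs \<sigma> Qbar D0 :: real
    and k :: nat
  assumes trans: "is_transition P"
    and gamma: "0 \<le> \<gamma>" "\<gamma> < 1"
    and norm: "is_norm_fn nrm"
    and norm_simplex: "\<forall>p\<in>prob_simplex. nrm p \<le> 1"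
    and dgf: "is_dgf nrm \<omega> g\<omega>"
    and reg: "regularizer_ok \<omega> g\<omega> h \<mu>h"
    and lip: "\<forall>s. \<forall>p\<in>prob_simplex. \<forall>p'\<in>prob_simplex. h s p - h s p' \<le> Mh * nrm (p - p')"
    and opt: "is_policy pstar"
      "\<forall>\<pi>. is_policy \<pi> \<longrightarrow> (\<forall>s. Vfun P c h \<gamma> pstar s \<le> Vfun P c h \<gamma> \<pi> s)"
    and prob: "prob_space M"
    and xi_meas: "\<forall>t. \<xi> t \<in> measurable M X"
    and pi0: "is_policy \<pi>0" "\<forall>w\<in>space M. pol 0 w = \<pi>0"
    and pol_meas: "\<forall>t s a. (\<lambda>w. pol t w s $ a) \<in> borel_measurable (hist_alg M X \<xi> t)"
    and Qt_meas: "\<forall>t s a. (\<lambda>w. Qt t w s $ a) \<in> borel_measurable (hist_alg M X \<xi> (Suc t))"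
    and spmd: "\<forall>t. \<forall>w\<in>space M. \<forall>s. pol (Suc t) w s \<in> prob_simplex \<and>
       (\<forall>p\<in>prob_simplex.
          \<eta> t * (Qt t w s \<bullet> pol (Suc t) w s + h s (pol (Suc t) w s))
            + bregman \<omega> g\<omega> (pol (Suc t) w s) (pol t w s)
          \<le> \<eta> t * (Qt t w s \<bullet> p + h s p) + bregman \<omega> g\<omega> p (pol t w s))"
    and A_nonneg: "0 \<le> vs" "0 \<le> \<sigma>" "0 \<le> Qbar"
    and A_bias: "\<forall>t. AE w in M. dual_normF nrm (\<lambda>s. \<chi> a.
         real_cond_exp M (hist_alg M X \<xi> t) (\<lambda>w'. Qt t w' s $ a) w
         - Qfun P c h \<gamma> (pol t w) s $ a) \<le> vs"
    and A_var: "\<forall>t. AE w in M. nn_cond_exp M (hist_alg M X \<xi> t)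
         (\<lambda>w'. ennreal ((dual_normF nrm (\<lambda>s. Qt t w' s - Qfun P c h \<gamma> (pol t w') s))\<^sup>2)) w
         \<le> ennreal (\<sigma>\<^sup>2)"
    and A_mom: "\<forall>t. AE w in M. nn_cond_exp M (hist_alg M X \<xi> t)
         (\<lambda>w'. ennreal ((dual_normF nrm (Qt t w'))\<^sup>2)) w \<le> ennreal (Qbar\<^sup>2)"
    and D0: "0 < D0" "\<forall>s. \<forall>p\<in>prob_simplex. bregman \<omega> g\<omega> p (\<pi>0 s) \<le> D0"
    and k: "1 \<le> k"
  shows
    "(\<forall>\<alpha>>0. (\<forall>t. \<eta> t = \<alpha> / sqrt (real k)) \<longrightarrow>
        (\<forall>s. (\<integral>w. Vfun P c h \<gamma> (pol (k - 1) w) s - Vfun P c h \<gamma> pstar s \<partial>M)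
           \<le> (D0 / \<alpha> + 2 * \<alpha> * (Qbar\<^sup>2 + Mh\<^sup>2) * ln (2 * real k)) / ((1 - \<gamma>) * sqrt (real k))
             + 4 * vs * (sqrt 2 + 8 * sqrt (real k)) / (1 - \<gamma>)))
     \<and> ((0 < \<mu>h \<and> (\<forall>t. \<eta> t = 1 / (\<mu>h * (real t + 1)))) \<longrightarrow>
        (\<forall>s. (\<integral>w. Vfun P c h \<gamma> (pol (k - 1) w) s - Vfun P c h \<gamma> pstar s \<partial>M)
           \<le> (\<mu>h * D0 + 3 * (Qbar\<^sup>2 + Mh\<^sup>2) * ln (2 * real k) / \<mu>h) / ((1 - \<gamma>) * real k)
             + 4 * vs * ln (2 * real k) / (1 - \<gamma>)))"
proof -
  have spmd: "spmd P c \<gamma> nrm \<omega> g\<omega> h \<mu>h Mh M X \<xi> Qt pol \<pi>0 \<eta> vs Qbar"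
    if "\<forall>t. \<eta> t > 0" "\<forall>t. 1 / \<eta> (Suc t) \<le> 1 / \<eta> t + \<mu>h"
    by (rule spmd.intro[OF pmd_setting.intro spmd_axioms.intro]) (fact trans gamma norm dgf reg lip
        norm_simplex prob xi_meas pi0 pol_meas Qt_meas spmd A_nonneg(1) A_bias A_mom that)+
  have D0_pstar: "\<And>s. bregman \<omega> g\<omega> (pstar s) (\<pi>0 s) \<le> D0" using D0(2) opt(1) by (simp add: is_policy_def)
  have "0 \<le> \<mu>h" using reg by (simp add: regularizer_ok_def)
  then show ?thesis using opt(1) k D0(1) D0_pstar
    by (intro conjI allI impI spmd.expected_last_iterate_gap_constant_step[OF spmd]
        spmd.expected_last_iterate_gap_decreasing_step[OF spmd]) (auto simp: algebra_simps add_pos_nonneg)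
qed

end
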